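(* Let $T=(\mathcal L,\mathcal R)$ be a GT system and $\mathbf D\subseteq\mathcal G(\mathcal L)$. If all non-garbage critical pairs of $T$ with respect to $\mathbf D$ are strongly joinable, then $T$ is locally confluent on $\mathbf D$.
   Context: Fix a label alphabet $\mathcal L=(\mathcal L_V,\mathcal L_E)$ of finite sets. Graphs are totally labelled: $G=(V,E,s,t,l,m)$ with $V,E$ finite, $s,t:E\to V$, $l:V\to\mathcal L_V$, $m:E\to\mathcal L_E$ total; morphisms preserve sources, targets and labels; $\mathcal G(\mathcal L)$ is the set of isomorphism classes. $H$ is a subgraph of $G$ if there is an inclusion morphism $H\hookrightarrow G$. A rule $\langle L\leftarrow K\rightarrow R\rangle$ consists of such graphs with $K$ a subgraph of $L$ and $R$. A direct derivation $G\Rightarrow_{r,g}H$ uses an injective match $g:L\to G$ satisfying the dangling condition (no edge outside $g(L)$ incident to a node in $g(V_L\setminus V_K)$); it deletes $g(L\setminus K)$ giving $D\subseteq G$, then adds $R\setminus K$ disjointly giving $H\supseteq D$, with comatch $h:R\to H$. A GT system $T=(\mathcal L,\mathcal R)$ has a finite rule set. The track morphism of $G\Rightarrow H$ is the partial map $G\rightharpoonup H$ which is the identity (via $D$) on items of $D$ and undefined elsewhere; tracks of derivation sequences are composites. Steps $H_1\Leftarrow_{r_1,g_1}G\Rightarrow_{r_2,g_2}H_2$ are parallelly independent if $g_1(L_1)\cap g_2(L_2)\subseteq g_1(K_1)\cap g_2(K_2)$. Such a pair is a critical pair if $G=g_1(L_1)\cup g_2(L_2)$, the steps are not parallelly independent,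 and $g_1\ne g_2$ when $r_1=r_2$. Its persistent nodes are the nodes $v$ of $G$ for which both tracks $G\Rightarrow H_1$ and $G\Rightarrow H_2$ are defined. It is strongly joinable if there are a graph $M$ and derivations $H_1\Rightarrow^*M\Leftarrow^*H_2$ such that for every persistent node $v$, the tracks of $G\Rightarrow H_1\Rightarrow^*M$ and $G\Rightarrow H_2\Rightarrow^*M$ are both defined at $v$ and equal. A set $\mathbf D\subseteq\mathcal G(\mathcal L)$ is subgraph closed if $[G]\in\mathbf D$ and $H$ a subgraph of $G$ imply $[H]\in\mathbf D$; the subgraph closure $\overline{\mathbf D}$ is the smallest subgraph-closed set containing $\mathbf D$. A critical pair $H_1\Leftarrow G\Rightarrow H_2$ is non-garbage w.r.t. $\mathbf D$ if $[G]\in\overline{\mathbf D}$. Graphs $H_1,H_2$ are joinable if $H_1\Rightarrow^*M\Leftarrow^*H_2$ for some $M$. $T$ is locally confluent on $\mathbf D$ if for all $G$ with $[G]\in\mathbf D$, $H_1\Leftarrow G\Rightarrow H_2$ implies $H_1,H_2$ joinable. *)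

theory Defs
  imports Main
begin

record ('a, 'b) graph =
  nodes :: "nat set"
  edges :: "nat set"
  src   :: "nat \<Rightarrow> nat"
  tgt   :: "nat \<Rightarrow> nat"
  nlab  :: "nat \<Rightarrow> 'a"
  elab  :: "nat \<Rightarrow> 'b"

definition wf_graph :: "('a, 'b) graph \<Rightarrow> bool" where
  "wf_graph G \<longleftrightarrow> finite (nodes G) \<and> finite (edges G) \<and>
     (\<forall>e\<in>edges G. src G e \<in> nodes G \<and> tgt G e \<in> nodes G)"

definition morph :: "('a, 'b) graph \<Rightarrow> ('a, 'b) graph \<Rightarrow> (nat \<Rightarrow> nat) \<Rightarrow> (nat \<Rightarrow> nat) \<Rightarrow> bool" where
  "morph G H fv fe \<longleftrightarrow>
     (\<forall>v\<in>nodes G. fv v \<in> nodes H \<and> nlab H (fv v) = nlab G v) \<and>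
     (\<forall>e\<in>edges G. fe e \<in> edges H \<and> src H (fe e) = fv (src G e) \<and>
                   tgt H (fe e) = fv (tgt G e) \<and> elab H (fe e) = elab G e)"

definition iso :: "('a, 'b) graph \<Rightarrow> ('a, 'b) graph \<Rightarrow> (nat \<Rightarrow> nat) \<Rightarrow> (nat \<Rightarrow> nat) \<Rightarrow> bool" where
  "iso G H fv fe \<longleftrightarrow> morph G H fv fe \<and> bij_betw fv (nodes G) (nodes H) \<and> bij_betw fe (edges G) (edges H)"

definition isomorphic :: "('a, 'b) graph \<Rightarrow> ('a, 'b) graph \<Rightarrow> bool" where
  "isomorphic G H \<longleftrightarrow> (\<exists>fv fe. iso G H fv fe)"

definition subgraph :: "('a, 'b) graph \<Rightarrow> ('a, 'b) graph \<Rightarrow> bool" where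
  "subgraph H G \<longleftrightarrow> morph H G id id"

definition cls :: "('a, 'b) graph \<Rightarrow> ('a, 'b) graph set" where
  "cls G = {H. wf_graph H \<and> isomorphic G H}"

definition graph_classes :: "('a, 'b) graph set set" where
  "graph_classes = {cls G | G. wf_graph G}"

definition subgraph_closed :: "('a, 'b) graph set set \<Rightarrow> bool" where
  "subgraph_closed S \<longleftrightarrow>
     (\<forall>G H. wf_graph G \<longrightarrow> cls G \<in> S \<longrightarrow> wf_graph H \<longrightarrow> subgraph H G \<longrightarrow> cls H \<in> S)"

definition subgraph_closure :: "('a, 'b) graph set set \<Rightarrow> ('a, 'b) graph set set" where
  "subgraph_closure D = \<Inter>{S. S \<subseteq> graph_classes \<and> D \<subseteq> S \<and> subgraph_closed S}"

record ('a, 'b) gt_rule =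
  lhs :: "('a, 'b) graph"
  itf :: "('a, 'b) graph"
  rhs :: "('a, 'b) graph"

definition gt_system :: "('a::finite, 'b::finite) gt_rule set \<Rightarrow> bool" where
  "gt_system Rs \<longleftrightarrow> finite Rs \<and>
     (\<forall>r\<in>Rs. wf_graph (lhs r) \<and> wf_graph (itf r) \<and> wf_graph (rhs r) \<and>
              subgraph (itf r) (lhs r) \<and> subgraph (itf r) (rhs r))"

definition deleted :: "('a, 'b) graph \<Rightarrow> ('a, 'b) gt_rule \<Rightarrow> (nat \<Rightarrow> nat) \<Rightarrow> (nat \<Rightarrow> nat) \<Rightarrow> ('a, 'b) graph" where
  "deleted G r gv ge = G\<lparr>nodes := nodes G - gv ` (nodes (lhs r) - nodes (itf r)),
                          edges := edges G - ge ` (edges (lhs r) - edges (itf r))\<rparr>"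

definition is_match :: "('a, 'b) gt_rule \<Rightarrow> ('a, 'b) graph \<Rightarrow> (nat \<Rightarrow> nat) \<Rightarrow> (nat \<Rightarrow> nat) \<Rightarrow> bool" where
  "is_match r G gv ge \<longleftrightarrow> morph (lhs r) G gv ge \<and>
     inj_on gv (nodes (lhs r)) \<and> inj_on ge (edges (lhs r)) \<and>
     (\<forall>e\<in>edges G - ge ` edges (lhs r).
        src G e \<notin> gv ` (nodes (lhs r) - nodes (itf r)) \<and>
        tgt G e \<notin> gv ` (nodes (lhs r) - nodes (itf r)))"

text \<open>\<open>direct_der Rs G r gv ge H tr\<close>: \<open>G \<Rightarrow>_{r,g} H\<close> with (node) track \<open>tr\<close>.
  \<open>H0\<close> is the result of deleting and then disjointly adding \<open>R - K\<close> (comatch \<open>h\<close>);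
  as usual, \<open>H\<close> is determined up to isomorphism, and the track is the
  identity on the nodes of \<open>D\<close> followed by the isomorphism \<open>H0 \<cong> H\<close>.\<close>
definition direct_der :: "('a, 'b) gt_rule set \<Rightarrow> ('a, 'b) graph \<Rightarrow> ('a, 'b) gt_rule \<Rightarrow>
    (nat \<Rightarrow> nat) \<Rightarrow> (nat \<Rightarrow> nat) \<Rightarrow> ('a, 'b) graph \<Rightarrow> (nat \<Rightarrow> nat option) \<Rightarrow> bool" where
  "direct_der Rs G r gv ge H tr \<longleftrightarrow>
     r \<in> Rs \<and> wf_graph G \<and> wf_graph H \<and> is_match r G gv ge \<and>
     (\<exists>H0 hv he \<phi>v \<phi>e.
        wf_graph H0 \<and> subgraph (deleted G r gv ge) H0 \<and>
        morph (rhs r) H0 hv he \<and> inj_on hv (nodes (rhs r)) \<and> inj_on he (edges (rhs r)) \<and>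
        (\<forall>v\<in>nodes (itf r). hv v = gv v) \<and> (\<forall>e\<in>edges (itf r). he e = ge e) \<and>
        nodes H0 = nodes (deleted G r gv ge) \<union> hv ` (nodes (rhs r) - nodes (itf r)) \<and>
        nodes (deleted G r gv ge) \<inter> hv ` (nodes (rhs r) - nodes (itf r)) = {} \<and>
        edges H0 = edges (deleted G r gv ge) \<union> he ` (edges (rhs r) - edges (itf r)) \<and>
        edges (deleted G r gv ge) \<inter> he ` (edges (rhs r) - edges (itf r)) = {} \<and>
        iso H0 H \<phi>v \<phi>e \<and>
        tr = (\<lambda>v. if v \<in> nodes (deleted G r gv ge) then Some (\<phi>v v) else None))"

inductive ders :: "('a, 'b) gt_rule set \<Rightarrow> ('a, 'b) graph \<Rightarrow> ('a, 'b) graph \<Rightarrow> (nat \<Rightarrow> nat option) \<Rightarrow> bool"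
  for Rs where
  refl: "wf_graph G \<Longrightarrow> iso G H fv fe \<Longrightarrow>
           ders Rs G H (\<lambda>v. if v \<in> nodes G then Some (fv v) else None)"
| step: "direct_der Rs G r gv ge G' t1 \<Longrightarrow> ders Rs G' H t2 \<Longrightarrow> ders Rs G H (t2 \<circ>\<^sub>m t1)"

definition par_indep :: "('a, 'b) gt_rule \<Rightarrow> (nat \<Rightarrow> nat) \<Rightarrow> (nat \<Rightarrow> nat) \<Rightarrow>
    ('a, 'b) gt_rule \<Rightarrow> (nat \<Rightarrow> nat) \<Rightarrow> (nat \<Rightarrow> nat) \<Rightarrow> bool" where
  "par_indep r1 g1v g1e r2 g2v g2e \<longleftrightarrow>
     g1v ` nodes (lhs r1) \<inter> g2v ` nodes (lhs r2) \<subseteq> g1v ` nodes (itf r1) \<inter> g2v ` nodes (itf r2) \<and>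
     g1e ` edges (lhs r1) \<inter> g2e ` edges (lhs r2) \<subseteq> g1e ` edges (itf r1) \<inter> g2e ` edges (itf r2)"

definition critical_pair :: "('a, 'b) gt_rule set \<Rightarrow> ('a, 'b) graph \<Rightarrow>
    ('a, 'b) gt_rule \<Rightarrow> (nat \<Rightarrow> nat) \<Rightarrow> (nat \<Rightarrow> nat) \<Rightarrow> ('a, 'b) graph \<Rightarrow> (nat \<Rightarrow> nat option) \<Rightarrow>
    ('a, 'b) gt_rule \<Rightarrow> (nat \<Rightarrow> nat) \<Rightarrow> (nat \<Rightarrow> nat) \<Rightarrow> ('a, 'b) graph \<Rightarrow> (nat \<Rightarrow> nat option) \<Rightarrow> bool" where
  "critical_pair Rs G r1 g1v g1e H1 t1 r2 g2v g2e H2 t2 \<longleftrightarrow>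
     direct_der Rs G r1 g1v g1e H1 t1 \<and> direct_der Rs G r2 g2v g2e H2 t2 \<and>
     nodes G = g1v ` nodes (lhs r1) \<union> g2v ` nodes (lhs r2) \<and>
     edges G = g1e ` edges (lhs r1) \<union> g2e ` edges (lhs r2) \<and>
     \<not> par_indep r1 g1v g1e r2 g2v g2e \<and>
     (r1 = r2 \<longrightarrow> \<not> ((\<forall>v\<in>nodes (lhs r1). g1v v = g2v v) \<and> (\<forall>e\<in>edges (lhs r1). g1e e = g2e e)))"

definition persistent :: "('a, 'b) graph \<Rightarrow> (nat \<Rightarrow> nat option) \<Rightarrow> (nat \<Rightarrow> nat option) \<Rightarrow> nat set" where
  "persistent G t1 t2 = {v \<in> nodes G. t1 v \<noteq> None \<and> t2 v \<noteq> None}"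

definition strongly_joinable :: "('a, 'b) gt_rule set \<Rightarrow> ('a, 'b) graph \<Rightarrow>
    ('a, 'b) graph \<Rightarrow> (nat \<Rightarrow> nat option) \<Rightarrow> ('a, 'b) graph \<Rightarrow> (nat \<Rightarrow> nat option) \<Rightarrow> bool" where
  "strongly_joinable Rs G H1 t1 H2 t2 \<longleftrightarrow>
     (\<exists>M s1 s2. ders Rs H1 M s1 \<and> ders Rs H2 M s2 \<and>
        (\<forall>v\<in>persistent G t1 t2. (s1 \<circ>\<^sub>m t1) v \<noteq> None \<and> (s1 \<circ>\<^sub>m t1) v = (s2 \<circ>\<^sub>m t2) v))"

definition joinable :: "('a, 'b) gt_rule set \<Rightarrow> ('a, 'b) graph \<Rightarrow> ('a, 'b) graph \<Rightarrow> bool" where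
  "joinable Rs H1 H2 \<longleftrightarrow> (\<exists>M s1 s2. ders Rs H1 M s1 \<and> ders Rs H2 M s2)"

definition locally_confluent_on :: "('a, 'b) gt_rule set \<Rightarrow> ('a, 'b) graph set set \<Rightarrow> bool" where
  "locally_confluent_on Rs D \<longleftrightarrow>
     (\<forall>G. wf_graph G \<longrightarrow> cls G \<in> D \<longrightarrow>
        (\<forall>r1 g1v g1e H1 t1 r2 g2v g2e H2 t2.
           direct_der Rs G r1 g1v g1e H1 t1 \<longrightarrow> direct_der Rs G r2 g2v g2e H2 t2 \<longrightarrow>
           joinable Rs H1 H2))"

end

theory Submission
  imports Defs
begin

text \<open>Two steps \<open>H1 \<Leftarrow> G \<Rightarrow> H2\<close> are joined differently in three cases. If they are parallelly
  independent, each rule still applies after the other step and both orders lead to isomorphic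
  results. If they apply the same rule at the same match, their results are isomorphic. Otherwise
  both steps restrict to the union \<open>Gc\<close> of their match images, a subgraph of \<open>G\<close>, where they form a
  critical pair whose class lies in the subgraph closure of \<open>D\<close>; hence it is strongly joinable.
  By the dangling condition the rest of \<open>G\<close> is attached to \<open>Gc\<close> only at persistent nodes, so
  the joining derivations embed into \<open>G\<close> (Embedding Theorem), and since their tracks agree on the
  persistent nodes, the two embedded results attach the rest of \<open>G\<close> in the same way and are
  isomorphic.\<close>

lemma morph_comp: "morph A B f1 f2 \<Longrightarrow> morph B C g1 g2 \<Longrightarrow> morph A C (g1 \<circ> f1) (g2 \<circ> f2)"
  by (auto simp: morph_def)

lemma morphD:
  assumes "morph G H fv fe"
  shows "\<And>v. v \<in> nodes G \<Longrightarrow> fv v \<in> nodes H" "\<And>v. v \<in> nodes G \<Longrightarrow> nlab H (fv v) = nlab G v"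
    "\<And>e. e \<in> edges G \<Longrightarrow> fe e \<in> edges H"
    "\<And>e. e \<in> edges G \<Longrightarrow> src H (fe e) = fv (src G e)"
    "\<And>e. e \<in> edges G \<Longrightarrow> tgt H (fe e) = fv (tgt G e)"
    "\<And>e. e \<in> edges G \<Longrightarrow> elab H (fe e) = elab G e"
  using assms by (auto simp: morph_def)

lemma morph_into_subgraph:
  assumes "morph L G gv ge" "subgraph D G" "gv ` nodes L \<subseteq> nodes D" "ge ` edges L \<subseteq> edges D"
  shows "morph L D gv ge"
  using assms unfolding subgraph_def morph_def by (auto simp: image_subset_iff)

lemma iso_id: "iso G G id id"
  by (auto simp: iso_def morph_def)

lemma iso_comp: "iso A B f1 f2 \<Longrightarrow> iso B C g1 g2 \<Longrightarrow> iso A C (g1 \<circ> f1) (g2 \<circ> f2)"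
  by (auto simp: iso_def intro: morph_comp bij_betw_trans)

lemma isoD:
  assumes "iso A B fv fe"
  shows "morph A B fv fe" "inj_on fv (nodes A)" "inj_on fe (edges A)"
    "fv ` nodes A = nodes B" "fe ` edges A = edges B"
  using assms by (auto simp: iso_def bij_betw_def)

lemma iso_inv_into:
  assumes "iso A B f g" "wf_graph A"
  shows "iso B A (inv_into (nodes A) f) (inv_into (edges A) g)"
proof -
  have bf: "bij_betw f (nodes A) (nodes B)" and bg: "bij_betw g (edges A) (edges B)"
    and m: "morph A B f g" using assms(1) by (auto simp: iso_def)
  have "morph B A (inv_into (nodes A) f) (inv_into (edges A) g)"
    unfolding morph_def
  proof (intro conjI ballI)
    fix v assume "v \<in> nodes B"
    then obtain u where u: "u \<in> nodes A" "v = f u" using bf by (auto simp: bij_betw_def)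
    then have "inv_into (nodes A) f v = u" using bf by (simp add: bij_betw_def)
    then show "inv_into (nodes A) f v \<in> nodes A" "nlab A (inv_into (nodes A) f v) = nlab B v"
      using u m by (auto simp: morph_def)
  next
    fix e assume "e \<in> edges B"
    then obtain d where d: "d \<in> edges A" "e = g d" using bg by (auto simp: bij_betw_def)
    have "inv_into (edges A) g e = d" using d bg by (simp add: bij_betw_def)
    moreover have "src A d \<in> nodes A" "tgt A d \<in> nodes A" using d assms(2) by (auto simp: wf_graph_def)
    moreover have "src B e = f (src A d)" "tgt B e = f (tgt A d)" "elab B e = elab A d"
      using m d by (auto simp: morph_def)
    ultimately show "inv_into (edges A) g e \<in> edges A"
      "src A (inv_into (edges A) g e) = inv_into (nodes A) f (src B e)"
      "tgt A (inv_into (edges A) g e) = inv_into (nodes A) f (tgt B e)"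
      "elab A (inv_into (edges A) g e) = elab B e"
      using d bf by (auto simp: bij_betw_def)
  qed
  then show ?thesis using bf bg by (simp add: iso_def bij_betw_inv_into)
qed

lemma iso_wf_graph: "iso A B f g \<Longrightarrow> wf_graph A \<Longrightarrow> wf_graph B"
  unfolding iso_def wf_graph_def morph_def bij_betw_def
  by (metis (no_types, lifting) finite_imageI imageE)

lemma subgraphD:
  assumes "subgraph H G"
  shows "nodes H \<subseteq> nodes G" "edges H \<subseteq> edges G"
    "\<And>v. v \<in> nodes H \<Longrightarrow> nlab G v = nlab H v"
    "\<And>e. e \<in> edges H \<Longrightarrow> src G e = src H e"
    "\<And>e. e \<in> edges H \<Longrightarrow> tgt G e = tgt H e"
    "\<And>e. e \<in> edges H \<Longrightarrow> elab G e = elab H e"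
  using assms by (auto simp: subgraph_def morph_def)

lemma wf_graph_srcD: "wf_graph G \<Longrightarrow> e \<in> edges G \<Longrightarrow> src G e \<in> nodes G"
  and wf_graph_tgtD: "wf_graph G \<Longrightarrow> e \<in> edges G \<Longrightarrow> tgt G e \<in> nodes G"
  by (auto simp: wf_graph_def)

lemma comp_inj_on_subset: "inj_on f A \<Longrightarrow> f ` A \<subseteq> B \<Longrightarrow> inj_on g B \<Longrightarrow> inj_on (g \<circ> f) A"
  by (meson comp_inj_on inj_on_subset)

lemma Un_Diff_disjoint: "S \<subseteq> D \<Longrightarrow> D \<inter> V = {} \<Longrightarrow> (D \<union> V) - S = (D - S) \<union> V"
  by blast

lemma disjoint_Diff_of_overlap: "X \<inter> Y \<subseteq> Z \<Longrightarrow> Y \<inter> (X - Z) = {}"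
  by blast

lemma subset_Diff_Diff: "S \<subseteq> X - A \<Longrightarrow> S \<subseteq> X - B \<Longrightarrow> S \<subseteq> X - A - B"
  by blast

lemma bij_betw_along:
  assumes "inj_on k' A" "\<And>x. x \<in> A \<Longrightarrow> f (k x) = k' x"
  shows "bij_betw f (k ` A) (k' ` A)"
proof -
  have "inj_on f (k ` A)"
    using assms by (auto simp: inj_on_def)
  moreover have "f ` k ` A = k' ` A" using assms(2) by (force simp: image_iff)
  ultimately show ?thesis by (simp add: bij_betw_def)
qed

lemma bij_betw_two_pieces:
  assumes i: "inj_on k A" "inj_on c B" "inj_on k' A" "inj_on c' B"
    and d: "k ` A \<inter> c ` B = {}" "k' ` A \<inter> c' ` B = {}"
  obtains f where "bij_betw f (k ` A \<union> c ` B) (k' ` A \<union> c' ` B)"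
    "\<And>x. x \<in> A \<Longrightarrow> f (k x) = k' x" "\<And>x. x \<in> B \<Longrightarrow> f (c x) = c' x"
proof -
  define f where "f y = (if y \<in> k ` A then k' (inv_into A k y) else c' (inv_into B c y))" for y
  have fk: "f (k x) = k' x" if "x \<in> A" for x using that i(1) by (simp add: f_def)
  have fc: "f (c x) = c' x" if "x \<in> B" for x
  proof -
    have "c x \<notin> k ` A" using d(1) that by blast
    then show ?thesis using that i(2) by (simp add: f_def)
  qed
  have "bij_betw f (k ` A \<union> c ` B) (k' ` A \<union> c' ` B)"
    by (rule bij_betw_combine[OF bij_betw_along[where f=f and k=k, OF i(3) fk]
          bij_betw_along[where f=f and k=c, OF i(4) fc] d(2)])
  then show ?thesis using fk fc by (rule that)
qed

lemma bij_betw_three_pieces: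
  assumes i: "inj_on l1 V1" "inj_on l2 V2" "inj_on l1' V1" "inj_on l2' V2"
    and d: "N \<inter> l1 ` V1 = {}" "N \<inter> l2 ` V2 = {}" "l1 ` V1 \<inter> l2 ` V2 = {}"
    and d': "N \<inter> l1' ` V1 = {}" "N \<inter> l2' ` V2 = {}" "l1' ` V1 \<inter> l2' ` V2 = {}"
  obtains f where "bij_betw f (N \<union> l1 ` V1 \<union> l2 ` V2) (N \<union> l1' ` V1 \<union> l2' ` V2)"
    "\<And>x. x \<in> N \<Longrightarrow> f x = x" "\<And>z. z \<in> V1 \<Longrightarrow> f (l1 z) = l1' z" "\<And>z. z \<in> V2 \<Longrightarrow> f (l2 z) = l2' z"
proof -
  define f where
    "f y = (if y \<in> N then y else if y \<in> l1 ` V1 then l1' (inv_into V1 l1 y) else l2' (inv_into V2 l2 y))" for y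
  have fN: "f x = x" if "x \<in> N" for x using that by (simp add: f_def)
  have f1: "f (l1 z) = l1' z" if "z \<in> V1" for z
  proof -
    have "l1 z \<notin> N" using d(1) that by blast
    then show ?thesis using that i(1) by (simp add: f_def)
  qed
  have f2: "f (l2 z) = l2' z" if "z \<in> V2" for z
  proof -
    have "l2 z \<notin> N" "l2 z \<notin> l1 ` V1" using d(2,3) that by blast+
    then show ?thesis using that i(2) by (simp add: f_def)
  qed
  have bN: "bij_betw f N N" using bij_betw_along[where f=f and k=id and k'=id and A=N] fN by simp
  have b1: "bij_betw f (l1 ` V1) (l1' ` V1)" by (rule bij_betw_along[where f=f and k=l1, OF i(3) f1])
  have b2: "bij_betw f (l2 ` V2) (l2' ` V2)" by (rule bij_betw_along[where f=f and k=l2, OF i(4) f2])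
  have "(N \<union> l1' ` V1) \<inter> l2' ` V2 = {}" using d'(2,3) by blast
  then have "bij_betw f (N \<union> l1 ` V1 \<union> l2 ` V2) (N \<union> l1' ` V1 \<union> l2' ` V2)"
    by (rule bij_betw_combine[OF bij_betw_combine[OF bN b1 d'(1)] b2])
  then show ?thesis using fN f1 f2 by (rule that)
qed

subsection \<open>Rules, matches and deletion\<close>

definition wf_rule :: "('a, 'b) gt_rule \<Rightarrow> bool" where
  "wf_rule r \<longleftrightarrow> wf_graph (lhs r) \<and> wf_graph (itf r) \<and> wf_graph (rhs r) \<and>
              subgraph (itf r) (lhs r) \<and> subgraph (itf r) (rhs r)"

lemma gt_system_wf_rule: "gt_system Rs \<Longrightarrow> r \<in> Rs \<Longrightarrow> wf_rule r"
  by (simp add: gt_system_def wf_rule_def)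

lemma wf_ruleD:
  assumes "wf_rule r"
  shows "wf_graph (lhs r)" "wf_graph (itf r)" "wf_graph (rhs r)"
    "nodes (itf r) \<subseteq> nodes (lhs r)" "edges (itf r) \<subseteq> edges (lhs r)"
    "nodes (itf r) \<subseteq> nodes (rhs r)" "edges (itf r) \<subseteq> edges (rhs r)"
  using assms unfolding wf_rule_def subgraph_def morph_def by auto

lemma deleted_simps [simp]:
  "nodes (deleted G r gv ge) = nodes G - gv ` (nodes (lhs r) - nodes (itf r))"
  "edges (deleted G r gv ge) = edges G - ge ` (edges (lhs r) - edges (itf r))"
  "src (deleted G r gv ge) = src G" "tgt (deleted G r gv ge) = tgt G"
  "nlab (deleted G r gv ge) = nlab G" "elab (deleted G r gv ge) = elab G"
  by (simp_all add: deleted_def)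

lemma matchD:
  assumes "is_match r G gv ge"
  shows "morph (lhs r) G gv ge" "inj_on gv (nodes (lhs r))" "inj_on ge (edges (lhs r))"
    "gv ` nodes (lhs r) \<subseteq> nodes G" "ge ` edges (lhs r) \<subseteq> edges G"
    "\<And>e. e \<in> edges G \<Longrightarrow> e \<notin> ge ` edges (lhs r) \<Longrightarrow> src G e \<notin> gv ` (nodes (lhs r) - nodes (itf r))"
    "\<And>e. e \<in> edges G \<Longrightarrow> e \<notin> ge ` edges (lhs r) \<Longrightarrow> tgt G e \<notin> gv ` (nodes (lhs r) - nodes (itf r))"
  using assms by (auto simp: is_match_def morph_def)

lemma match_itf_nodes:
  assumes "is_match r G gv ge" "wf_rule r" "v \<in> nodes (itf r)"
  shows "gv v \<in> nodes (deleted G r gv ge)"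
  using assms wf_ruleD(4)[OF assms(2)] matchD(2,4)[OF assms(1)]
  by (auto simp: inj_on_def) blast+

lemma match_itf_edges:
  assumes "is_match r G gv ge" "wf_rule r" "e \<in> edges (itf r)"
  shows "ge e \<in> edges (deleted G r gv ge)"
  using assms wf_ruleD(5)[OF assms(2)] matchD(3,5)[OF assms(1)]
  by (auto simp: inj_on_def) blast+

text \<open>The dangling condition is exactly what keeps the deleted graph well-formed.\<close>
lemma deleted_edge_endpoints:
  assumes M: "is_match r G gv ge" and r: "wf_rule r" and G: "wf_graph G"
    and e: "e \<in> edges (deleted G r gv ge)"
  shows "src G e \<in> nodes (deleted G r gv ge)" "tgt G e \<in> nodes (deleted G r gv ge)"
proof -
  have "v \<in> nodes (deleted G r gv ge)" if v: "v = src G e \<or> v = tgt G e" for v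
  proof (cases "e \<in> ge ` edges (lhs r)")
    case True
    then obtain d where d: "d \<in> edges (itf r)" "e = ge d" using e by auto
    have "v = gv (src (itf r) d) \<or> v = gv (tgt (itf r) d)"
      using v d matchD(1)[OF M] wf_ruleD(5)[OF r] subgraphD(4,5)[of "itf r" "lhs r"] r
      by (auto simp: morph_def wf_rule_def)
    then show ?thesis
      using match_itf_nodes[OF M r] wf_graph_srcD[OF wf_ruleD(2)[OF r] d(1)]
        wf_graph_tgtD[OF wf_ruleD(2)[OF r] d(1)] by auto
  next
    case False
    have eG: "e \<in> edges G" using e by simp
    then have "v \<in> nodes G" using v G by (auto simp: wf_graph_def)
    moreover have "v \<notin> gv ` (nodes (lhs r) - nodes (itf r))"
      using v matchD(6,7)[OF M eG False] by metis
    ultimately show ?thesis by simp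
  qed
  then show "src G e \<in> nodes (deleted G r gv ge)" "tgt G e \<in> nodes (deleted G r gv ge)" by auto
qed

lemma wf_graph_deleted:
  assumes "is_match r G gv ge" "wf_rule r" "wf_graph G"
  shows "wf_graph (deleted G r gv ge)"
  using deleted_edge_endpoints[OF assms] assms(3) by (auto simp: wf_graph_def)

lemma match_itf_morph:
  assumes "is_match r G gv ge" "wf_rule r"
  shows "morph (itf r) (deleted G r gv ge) gv ge"
proof -
  have KL: "subgraph (itf r) (lhs r)" using assms(2) by (simp add: wf_rule_def)
  have "morph (itf r) G gv ge"
    using morph_comp[OF KL[unfolded subgraph_def] matchD(1)[OF assms(1)]] by simp
  then show ?thesis
    using match_itf_nodes[OF assms] match_itf_edges[OF assms] by (simp add: morph_def)
qed

subsection \<open>Gluing the right-hand side\<close>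

abbreviation new_nodes :: "('a, 'b) gt_rule \<Rightarrow> nat set" where
  "new_nodes r \<equiv> nodes (rhs r) - nodes (itf r)"

abbreviation new_edges :: "('a, 'b) gt_rule \<Rightarrow> nat set" where
  "new_edges r \<equiv> edges (rhs r) - edges (itf r)"

text \<open>\<open>H\<close> is \<open>D\<close> with a fresh copy of \<open>R - K\<close> added along the comatch \<open>hv, he\<close>:
  the graph \<open>H0\<close> in the definition of \<open>direct_der\<close>.\<close>
definition glued_rhs :: "('a, 'b) graph \<Rightarrow> ('a, 'b) gt_rule \<Rightarrow> (nat \<Rightarrow> nat) \<Rightarrow> (nat \<Rightarrow> nat) \<Rightarrow>
    ('a, 'b) graph \<Rightarrow> bool" where
  "glued_rhs D r hv he H \<longleftrightarrow> wf_graph H \<and> subgraph D H \<and>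
     morph (rhs r) H hv he \<and> inj_on hv (nodes (rhs r)) \<and> inj_on he (edges (rhs r)) \<and>
     nodes H = nodes D \<union> hv ` new_nodes r \<and>
     nodes D \<inter> hv ` new_nodes r = {} \<and>
     edges H = edges D \<union> he ` new_edges r \<and>
     edges D \<inter> he ` new_edges r = {}"

lemma glued_rhsD:
  assumes "glued_rhs D r hv he H"
  shows "wf_graph H" "subgraph D H" "morph (rhs r) H hv he"
    "inj_on hv (nodes (rhs r))" "inj_on he (edges (rhs r))"
    "nodes H = nodes D \<union> hv ` new_nodes r"
    "nodes D \<inter> hv ` new_nodes r = {}"
    "edges H = edges D \<union> he ` new_edges r"
    "edges D \<inter> he ` new_edges r = {}"
  using assms unfolding glued_rhs_def by blast+

lemma direct_der_glued:
  "direct_der Rs G r gv ge H tr \<longleftrightarrow> r \<in> Rs \<and> wf_graph G \<and> wf_graph H \<and> is_match r G gv ge \<and>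
    (\<exists>H0 hv he \<phi>v \<phi>e. glued_rhs (deleted G r gv ge) r hv he H0 \<and>
      (\<forall>v\<in>nodes (itf r). hv v = gv v) \<and> (\<forall>e\<in>edges (itf r). he e = ge e) \<and>
      iso H0 H \<phi>v \<phi>e \<and> tr = (\<lambda>v. if v \<in> nodes (deleted G r gv ge) then Some (\<phi>v v) else None))"
  unfolding direct_der_def glued_rhs_def by (simp only: conj_ac ex_simps)

lemma direct_derE:
  assumes "direct_der Rs G r gv ge H tr"
  obtains H0 hv he \<phi>v \<phi>e where "r \<in> Rs" "wf_graph G" "wf_graph H" "is_match r G gv ge"
    "glued_rhs (deleted G r gv ge) r hv he H0"
    "\<forall>v\<in>nodes (itf r). hv v = gv v" "\<forall>e\<in>edges (itf r). he e = ge e"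
    "iso H0 H \<phi>v \<phi>e" "tr = (\<lambda>v. if v \<in> nodes (deleted G r gv ge) then Some (\<phi>v v) else None)"
  using assms unfolding direct_der_glued by blast

lemma direct_derI:
  assumes "r \<in> Rs" "wf_graph G" "wf_graph H" "is_match r G gv ge"
    "glued_rhs (deleted G r gv ge) r hv he H0"
    "\<forall>v\<in>nodes (itf r). hv v = gv v" "\<forall>e\<in>edges (itf r). he e = ge e" "iso H0 H \<phi>v \<phi>e"
  shows "direct_der Rs G r gv ge H (\<lambda>v. if v \<in> nodes (deleted G r gv ge) then Some (\<phi>v v) else None)"
  using assms unfolding direct_der_glued by blast

lemma inj_on_shift:
  assumes "inj_on k A" "\<forall>x\<in>A. k x < (N::nat)"
  shows "inj_on (\<lambda>z. if z \<in> A then k z else z + N) B"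
proof (rule inj_onI)
  fix x y assume "(if x \<in> A then k x else x + N) = (if y \<in> A then k y else y + N)"
  then show "x = y" using assms by (auto split: if_splits dest: inj_onD)
qed

text \<open>The pushout along an injective morphism \<open>K \<rightarrow> D\<close>: new items are numbered beyond
  all items of \<open>D\<close>, so that they are fresh.\<close>
lemma glued_rhs_exists:
  assumes D: "wf_graph D" and r: "wf_rule r" and k: "morph (itf r) D kv ke"
    and ikv: "inj_on kv (nodes (itf r))" and ike: "inj_on ke (edges (itf r))"
  obtains H hv he where "glued_rhs D r hv he H"
    "\<forall>v\<in>nodes (itf r). hv v = kv v" "\<forall>e\<in>edges (itf r). he e = ke e"
proof -
  let ?K = "itf r" and ?R = "rhs r"
  obtain N where N: "\<forall>x\<in>nodes D. x < N" using D by (auto simp: wf_graph_def finite_nat_set_iff_bounded)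
  obtain NE where NE: "\<forall>x\<in>edges D. x < NE" using D by (auto simp: wf_graph_def finite_nat_set_iff_bounded)
  define hv where "hv = (\<lambda>z. if z \<in> nodes ?K then kv z else z + N)"
  define he where "he = (\<lambda>z. if z \<in> edges ?K then ke z else z + NE)"
  define H :: "('a, 'b) graph" where "H = \<lparr>nodes = nodes D \<union> hv ` new_nodes r,
      edges = edges D \<union> he ` new_edges r,
      src = (\<lambda>e. if e < NE then src D e else hv (src ?R (e - NE))),
      tgt = (\<lambda>e. if e < NE then tgt D e else hv (tgt ?R (e - NE))),
      nlab = (\<lambda>v. if v < N then nlab D v else nlab ?R (v - N)),
      elab = (\<lambda>e. if e < NE then elab D e else elab ?R (e - NE))\<rparr>"
  note rD = wf_ruleD[OF r]
  have kD: "kv z \<in> nodes D" "nlab D (kv z) = nlab ?K z" if "z \<in> nodes ?K" for z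
    using k that by (auto simp: morph_def)
  have keD: "ke z \<in> edges D" "src D (ke z) = kv (src ?K z)" "tgt D (ke z) = kv (tgt ?K z)"
    "elab D (ke z) = elab ?K z" if "z \<in> edges ?K" for z
    using k that by (auto simp: morph_def)
  have KR: "subgraph ?K ?R" using r by (simp add: wf_rule_def)
  have sub: "subgraph D H" using N NE by (auto simp: subgraph_def morph_def H_def)
  have morph: "morph ?R H hv he"
    unfolding morph_def
  proof (intro conjI ballI)
    fix z assume z: "z \<in> nodes ?R"
    show "hv z \<in> nodes H" using z kD by (auto simp: H_def hv_def)
    show "nlab H (hv z) = nlab ?R z"
      using z kD N subgraphD(3)[OF KR] by (auto simp: H_def hv_def)
  next
    fix z assume z: "z \<in> edges ?R"
    show "he z \<in> edges H" using z keD by (auto simp: H_def he_def)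
    have "src H (he z) = hv (src ?R z) \<and> tgt H (he z) = hv (tgt ?R z) \<and> elab H (he z) = elab ?R z"
    proof (cases "z \<in> edges ?K")
      case True
      then show ?thesis
        using keD[OF True] NE subgraphD(4-6)[OF KR True] wf_graph_srcD[OF rD(2) True]
          wf_graph_tgtD[OF rD(2) True] by (auto simp: H_def he_def hv_def)
    qed (auto simp: H_def he_def)
    then show "src H (he z) = hv (src ?R z)" "tgt H (he z) = hv (tgt ?R z)" "elab H (he z) = elab ?R z"
      by auto
  qed
  have wf: "wf_graph H"
  proof -
    have "src H e \<in> nodes H \<and> tgt H e \<in> nodes H" if e: "e \<in> edges H" for e
    proof (cases "e \<in> edges D")
      case True then show ?thesis using D NE by (auto simp: wf_graph_def H_def)
    next
      case False
      then obtain z where "z \<in> edges ?R" "e = he z" using e by (auto simp: H_def)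
      then show ?thesis using morph rD(3) by (auto simp: morph_def wf_graph_def)
    qed
    then show ?thesis using D rD(3) by (auto simp: wf_graph_def H_def)
  qed
  have inj: "inj_on hv (nodes ?R)" "inj_on he (edges ?R)"
    unfolding hv_def he_def using ikv ike kD(1) keD(1) N NE by (auto intro!: inj_on_shift)
  have disj: "nodes D \<inter> hv ` new_nodes r = {}" "edges D \<inter> he ` new_edges r = {}"
    using N NE by (auto simp: hv_def he_def)
  have "glued_rhs D r hv he H"
    unfolding glued_rhs_def using wf sub morph inj disj by (simp add: H_def)
  then show ?thesis using that by (simp add: hv_def he_def)
qed

lemma glued_rhs_of_match:
  assumes "wf_rule r" "wf_graph G" "is_match r G gv ge"
  obtains H hv he where "glued_rhs (deleted G r gv ge) r hv he H"
    "\<forall>v\<in>nodes (itf r). hv v = gv v" "\<forall>e\<in>edges (itf r). he e = ge e"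
  by (rule glued_rhs_exists[OF wf_graph_deleted[OF assms(3,1,2)] assms(1)
        match_itf_morph[OF assms(3,1)] inj_on_subset[OF matchD(2)[OF assms(3)] wf_ruleD(4)[OF assms(1)]]
        inj_on_subset[OF matchD(3)[OF assms(3)] wf_ruleD(5)[OF assms(1)]]])

lemma direct_der_exists:
  assumes "r \<in> Rs" "wf_rule r" "wf_graph G" "is_match r G gv ge"
  obtains H tr where "direct_der Rs G r gv ge H tr"
proof -
  obtain H hv he where H: "glued_rhs (deleted G r gv ge) r hv he H"
    and "\<forall>v\<in>nodes (itf r). hv v = gv v" "\<forall>e\<in>edges (itf r). he e = ge e"
    by (rule glued_rhs_of_match[OF assms(2-4)])
  then show ?thesis
    using that direct_derI[OF assms(1,3) glued_rhsD(1)[OF H] assms(4) H _ _ iso_id] by blast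
qed

subsection \<open>Extending a graph by a context\<close>

definition boundary :: "('a, 'b) graph \<Rightarrow> ('a, 'b) graph \<Rightarrow> nat set \<Rightarrow> bool" where
  "boundary Gc G B \<longleftrightarrow> wf_graph Gc \<and> wf_graph G \<and> subgraph Gc G \<and> B \<subseteq> nodes Gc \<and>
     (\<forall>e\<in>edges G - edges Gc. (src G e \<in> nodes Gc \<longrightarrow> src G e \<in> B) \<and>
                              (tgt G e \<in> nodes Gc \<longrightarrow> tgt G e \<in> B))"

definition attach :: "('a, 'b) graph \<Rightarrow> (nat \<Rightarrow> nat) \<Rightarrow> (nat \<Rightarrow> nat) \<Rightarrow> (nat \<Rightarrow> nat) \<Rightarrow> nat \<Rightarrow> nat" where
  "attach Gc kv cv a v = (if v \<in> nodes Gc then kv (a v) else cv v)"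

text \<open>\<open>X'\<close> is \<open>X\<close> with the context \<open>G - Gc\<close> added: \<open>kv, ke\<close> embed \<open>X\<close>, \<open>cv, ce\<close> embed the
  context, and a context edge attached to a boundary node \<open>b\<close> is attached to \<open>kv (a b)\<close> instead.\<close>
definition extension :: "('a, 'b) graph \<Rightarrow> ('a, 'b) graph \<Rightarrow> nat set \<Rightarrow> ('a, 'b) graph \<Rightarrow> ('a, 'b) graph \<Rightarrow>
   (nat \<Rightarrow> nat) \<Rightarrow> (nat \<Rightarrow> nat) \<Rightarrow> (nat \<Rightarrow> nat) \<Rightarrow> (nat \<Rightarrow> nat) \<Rightarrow> (nat \<Rightarrow> nat) \<Rightarrow> bool" where
  "extension Gc G B X X' kv ke cv ce a \<longleftrightarrow> boundary Gc G B \<and>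
     wf_graph X \<and> wf_graph X' \<and> morph X X' kv ke \<and> inj_on kv (nodes X) \<and> inj_on ke (edges X) \<and>
     inj_on cv (nodes G - nodes Gc) \<and> inj_on ce (edges G - edges Gc) \<and>
     nodes X' = kv ` nodes X \<union> cv ` (nodes G - nodes Gc) \<and>
     kv ` nodes X \<inter> cv ` (nodes G - nodes Gc) = {} \<and>
     edges X' = ke ` edges X \<union> ce ` (edges G - edges Gc) \<and>
     ke ` edges X \<inter> ce ` (edges G - edges Gc) = {} \<and>
     (\<forall>x\<in>nodes G - nodes Gc. nlab X' (cv x) = nlab G x) \<and>
     (\<forall>b\<in>B. a b \<in> nodes X) \<and>
     (\<forall>e\<in>edges G - edges Gc. elab X' (ce e) = elab G e \<and>
         src X' (ce e) = attach Gc kv cv a (src G e) \<and> tgt X' (ce e) = attach Gc kv cv a (tgt G e))"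

lemma boundaryD:
  assumes "boundary Gc G B"
  shows "wf_graph Gc" "wf_graph G" "subgraph Gc G" "B \<subseteq> nodes Gc"
    "\<And>e. e \<in> edges G - edges Gc \<Longrightarrow> src G e \<in> nodes Gc \<Longrightarrow> src G e \<in> B"
    "\<And>e. e \<in> edges G - edges Gc \<Longrightarrow> tgt G e \<in> nodes Gc \<Longrightarrow> tgt G e \<in> B"
  using assms unfolding boundary_def by auto

lemma extensionD:
  assumes "extension Gc G B X X' kv ke cv ce a"
  shows "boundary Gc G B" "wf_graph X" "wf_graph X'" "morph X X' kv ke"
    "inj_on kv (nodes X)" "inj_on ke (edges X)"
    "inj_on cv (nodes G - nodes Gc)" "inj_on ce (edges G - edges Gc)"
    "nodes X' = kv ` nodes X \<union> cv ` (nodes G - nodes Gc)"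
    "kv ` nodes X \<inter> cv ` (nodes G - nodes Gc) = {}"
    "edges X' = ke ` edges X \<union> ce ` (edges G - edges Gc)"
    "ke ` edges X \<inter> ce ` (edges G - edges Gc) = {}"
    "\<And>x. x \<in> nodes G - nodes Gc \<Longrightarrow> nlab X' (cv x) = nlab G x"
    "\<And>b. b \<in> B \<Longrightarrow> a b \<in> nodes X"
    "\<And>e. e \<in> edges G - edges Gc \<Longrightarrow> elab X' (ce e) = elab G e"
    "\<And>e. e \<in> edges G - edges Gc \<Longrightarrow> src X' (ce e) = attach Gc kv cv a (src G e)"
    "\<And>e. e \<in> edges G - edges Gc \<Longrightarrow> tgt X' (ce e) = attach Gc kv cv a (tgt G e)"
  using assms unfolding extension_def by (elim conjE; metis)+

lemma extensionI:
  assumes "boundary Gc G B" "wf_graph X" "wf_graph X'" "morph X X' kv ke"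
    "inj_on kv (nodes X)" "inj_on ke (edges X)"
    "inj_on cv (nodes G - nodes Gc)" "inj_on ce (edges G - edges Gc)"
    "nodes X' = kv ` nodes X \<union> cv ` (nodes G - nodes Gc)"
    "kv ` nodes X \<inter> cv ` (nodes G - nodes Gc) = {}"
    "edges X' = ke ` edges X \<union> ce ` (edges G - edges Gc)"
    "ke ` edges X \<inter> ce ` (edges G - edges Gc) = {}"
    "\<And>x. x \<in> nodes G - nodes Gc \<Longrightarrow> nlab X' (cv x) = nlab G x"
    "\<And>b. b \<in> B \<Longrightarrow> a b \<in> nodes X"
    "\<And>e. e \<in> edges G - edges Gc \<Longrightarrow> elab X' (ce e) = elab G e"
    "\<And>e. e \<in> edges G - edges Gc \<Longrightarrow> src X' (ce e) = attach Gc kv cv a (src G e)"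
    "\<And>e. e \<in> edges G - edges Gc \<Longrightarrow> tgt X' (ce e) = attach Gc kv cv a (tgt G e)"
  shows "extension Gc G B X X' kv ke cv ce a"
  unfolding extension_def by (intro conjI ballI assms)

lemma extension_refl:
  assumes "boundary Gc G B"
  shows "extension Gc G B Gc G id id id id id"
proof -
  note b = boundaryD[OF assms]
  have "nodes Gc \<subseteq> nodes G" "edges Gc \<subseteq> edges G" using subgraphD(1,2)[OF b(3)] .
  with b(4) show ?thesis
    by (intro extensionI[OF assms b(1,2) b(3)[unfolded subgraph_def]]) (auto simp: attach_def)
qed

lemma boundary_self: "wf_graph G \<Longrightarrow> boundary G G {}"
  by (simp add: boundary_def subgraph_def morph_def)

lemma extension_empty_context:
  assumes "wf_graph G"
  shows "extension G G {} X X' kv ke cv ce a \<longleftrightarrow> wf_graph X \<and> iso X X' kv ke"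
proof
  assume E: "extension G G {} X X' kv ke cv ce a"
  show "wf_graph X \<and> iso X X' kv ke"
    using extensionD(2,4,5,6,9,11)[OF E] by (simp add: iso_def bij_betw_def)
next
  assume X: "wf_graph X \<and> iso X X' kv ke"
  note boundary_self[OF assms]
  moreover note i = isoD[of X X' kv ke]
  ultimately show "extension G G {} X X' kv ke cv ce a"
    using X iso_wf_graph[of X X' kv ke] by (intro extensionI) (simp_all add: i(4,5)[symmetric] i(1-3))
qed

lemma extension_cong_attach:
  assumes "extension Gc G B X X' kv ke cv ce a" "\<forall>b\<in>B. a b = a' b"
  shows "extension Gc G B X X' kv ke cv ce a'"
proof -
  note e = extensionD[OF assms(1)]
  have "attach Gc kv cv a (src G e) = attach Gc kv cv a' (src G e)"
    "attach Gc kv cv a (tgt G e) = attach Gc kv cv a' (tgt G e)" if "e \<in> edges G - edges Gc" for e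
    using boundaryD(5,6)[OF e(1) that] assms(2) by (auto simp: attach_def)
  then show ?thesis using e assms(2) by (intro extensionI) simp_all
qed

lemma extension_iso_transport:
  assumes E: "extension Gc G B X X' kv ke cv ce a"
    and I: "iso X Z fv fe" and I': "iso X' Z' gv ge"
  defines "kv' \<equiv> gv \<circ> kv \<circ> inv_into (nodes X) fv" and "ke' \<equiv> ge \<circ> ke \<circ> inv_into (edges X) fe"
  shows "extension Gc G B Z Z' kv' ke' (gv \<circ> cv) (ge \<circ> ce) (fv \<circ> a)"
proof -
  let ?CV = "nodes G - nodes Gc" and ?CE = "edges G - edges Gc"
  note e = extensionD[OF E]
  have Iinv: "iso Z X (inv_into (nodes X) fv) (inv_into (edges X) fe)" using iso_inv_into[OF I e(2)] .
  note f = isoD[OF I] and g = isoD[OF I'] and fi = isoD[OF Iinv]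
  have kX: "kv ` nodes X \<subseteq> nodes X'" "ke ` edges X \<subseteq> edges X'"
    and cX: "cv ` ?CV \<subseteq> nodes X'" "ce ` ?CE \<subseteq> edges X'" using e(9,11) by auto
  have img: "kv' ` nodes Z = gv ` kv ` nodes X" "ke' ` edges Z = ge ` ke ` edges X"
    by (simp_all only: kv'_def ke'_def image_comp[symmetric] fi(4,5))
  have inj: "inj_on kv' (nodes Z)" "inj_on ke' (edges Z)"
    unfolding kv'_def ke'_def
    using comp_inj_on_subset[OF fi(2) _ comp_inj_on_subset[OF e(5) kX(1) g(2)]]
      comp_inj_on_subset[OF fi(3) _ comp_inj_on_subset[OF e(6) kX(2) g(3)]] fi(4,5) by simp_all
  have attach: "gv (attach Gc kv cv a v) = attach Gc kv' (gv \<circ> cv) (fv \<circ> a) v"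
    if "v \<in> nodes Gc \<longrightarrow> v \<in> B" for v
    using that e(14) f(2) by (auto simp: attach_def kv'_def)
  have ctx: "src Z' (ge (ce d)) = gv (src X' (ce d))" "tgt Z' (ge (ce d)) = gv (tgt X' (ce d))"
    "elab Z' (ge (ce d)) = elab X' (ce d)" if "d \<in> ?CE" for d
    using g(1) cX that by (auto simp: morph_def)
  have ctx_nodes: "nlab Z' (gv (cv x)) = nlab X' (cv x)" if "x \<in> ?CV" for x
    using g(1) cX that by (auto simp: morph_def)
  show ?thesis
  proof (rule extensionI)
    show "morph Z Z' kv' ke'"
      using morph_comp[OF morph_comp[OF fi(1) e(4)] g(1)] by (simp add: kv'_def ke'_def comp_assoc)
    show "nodes Z' = kv' ` nodes Z \<union> (gv \<circ> cv) ` ?CV" "edges Z' = ke' ` edges Z \<union> (ge \<circ> ce) ` ?CE"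
      using g(4,5)[symmetric] e(9,11) img by (simp_all add: image_Un image_comp)
    show "kv' ` nodes Z \<inter> (gv \<circ> cv) ` ?CV = {}" "ke' ` edges Z \<inter> (ge \<circ> ce) ` ?CE = {}"
      by (simp_all only: img image_comp[symmetric] inj_on_image_Int[OF g(2) kX(1) cX(1), symmetric]
          inj_on_image_Int[OF g(3) kX(2) cX(2), symmetric] e(10,12) image_empty)
  qed (use e inj f(4) iso_wf_graph[OF I e(2)] iso_wf_graph[OF I' e(3)] attach ctx ctx_nodes
        comp_inj_on_subset[OF e(7) cX(1) g(2)] comp_inj_on_subset[OF e(8) cX(2) g(3)]
        boundaryD(5,6)[OF e(1)] in auto)
qed

lemma extension_deleted:
  assumes E: "extension Gc G B X X' kv ke cv ce a" and r: "wf_rule r"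
    and M: "is_match r X gv ge" and M': "is_match r X' gv' ge'"
    and mv: "\<forall>v\<in>nodes (lhs r). gv' v = kv (gv v)" and me: "\<forall>e\<in>edges (lhs r). ge' e = ke (ge e)"
    and aD: "\<forall>b\<in>B. a b \<in> nodes (deleted X r gv ge)"
  shows "extension Gc G B (deleted X r gv ge) (deleted X' r gv' ge') kv ke cv ce a"
proof -
  let ?CV = "nodes G - nodes Gc" and ?CE = "edges G - edges Gc"
  let ?DV = "gv ` (nodes (lhs r) - nodes (itf r))" and ?DE = "ge ` (edges (lhs r) - edges (itf r))"
  note e = extensionD[OF E]
  have DX: "?DV \<subseteq> nodes X" "?DE \<subseteq> edges X" using matchD(4,5)[OF M] by auto
  have "gv' ` (nodes (lhs r) - nodes (itf r)) = kv ` ?DV"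
    "ge' ` (edges (lhs r) - edges (itf r)) = ke ` ?DE"
    using mv me by (auto simp: image_iff)
  then have DX': "nodes (deleted X' r gv' ge') = (kv ` nodes X \<union> cv ` ?CV) - kv ` ?DV"
    "edges (deleted X' r gv' ge') = (ke ` edges X \<union> ce ` ?CE) - ke ` ?DE"
    using e(9,11) by simp_all
  have "cv ` ?CV \<inter> kv ` ?DV \<subseteq> kv ` nodes X \<inter> cv ` ?CV"
    "ce ` ?CE \<inter> ke ` ?DE \<subseteq> ke ` edges X \<inter> ce ` ?CE"
    using DX by auto
  then have disj: "cv ` ?CV \<inter> kv ` ?DV = {}" "ce ` ?CE \<inter> ke ` ?DE = {}"
    unfolding e(10,12) by simp_all
  have nodes: "nodes (deleted X' r gv' ge') = kv ` nodes (deleted X r gv ge) \<union> cv ` ?CV"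
    and edges: "edges (deleted X' r gv' ge') = ke ` edges (deleted X r gv ge) \<union> ce ` ?CE"
    unfolding DX' by (simp_all only: Un_Diff Diff_triv[OF disj(1)] Diff_triv[OF disj(2)] deleted_simps
        inj_on_image_set_diff[OF e(5) Diff_subset DX(1)] inj_on_image_set_diff[OF e(6) Diff_subset DX(2)])
  show ?thesis
  proof (rule extensionI[OF e(1) wf_graph_deleted[OF M r e(2)] wf_graph_deleted[OF M' r e(3)]
        _ _ _ e(7,8) nodes _ edges])
    show "morph (deleted X r gv ge) (deleted X' r gv' ge') kv ke"
      using e(4) unfolding morph_def nodes edges by auto
    show "inj_on kv (nodes (deleted X r gv ge))" "inj_on ke (edges (deleted X r gv ge))"
      using inj_on_subset[OF e(5)] inj_on_subset[OF e(6)] by simp_all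
    show "kv ` nodes (deleted X r gv ge) \<inter> cv ` ?CV = {}" "ke ` edges (deleted X r gv ge) \<inter> ce ` ?CE = {}"
      using e(10,12) by auto
  qed (use e(13-17) aD in simp_all)
qed

lemma morph_glued_rhs:
  assumes r: "wf_rule r" and D: "wf_graph D" and k: "morph D D' kv ke"
    and H: "glued_rhs D r hv he H" and H': "glued_rhs D' r hv' he' H'"
    and kv'D: "\<And>x. x \<in> nodes D \<Longrightarrow> kv' x = kv x" and ke'D: "\<And>y. y \<in> edges D \<Longrightarrow> ke' y = ke y"
    and kv'_hv: "\<And>z. z \<in> nodes (rhs r) \<Longrightarrow> kv' (hv z) = hv' z"
    and ke'_he: "\<And>z. z \<in> edges (rhs r) \<Longrightarrow> ke' (he z) = he' z"
  shows "morph H H' kv' ke'"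
proof -
  note h = glued_rhsD[OF H] and h' = glued_rhsD[OF H']
  show ?thesis
    unfolding morph_def
    proof (intro conjI ballI)
      fix x assume "x \<in> nodes H"
      then consider (old) "x \<in> nodes D" | (new) z where "z \<in> new_nodes r" "x = hv z" using h(6) by auto
      then have "kv' x \<in> nodes H' \<and> nlab H' (kv' x) = nlab H x"
      proof cases
        case old
        then have "kv x \<in> nodes D'" "nlab D' (kv x) = nlab D x" using morphD(1,2)[OF k] by simp_all
        then show ?thesis
          using old kv'D subgraphD(1)[OF h(2)] subgraphD(3)[OF h(2) old] subgraphD(1,3)[OF h'(2)] by auto
      next
        case (new z)
        then show ?thesis using morphD(1,2)[OF h(3)] morphD(1,2)[OF h'(3)] kv'_hv by simp
      qed
      then show "kv' x \<in> nodes H'" "nlab H' (kv' x) = nlab H x" by simp_all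
    next
      fix y assume "y \<in> edges H"
      then consider (old) "y \<in> edges D" | (new) z where "z \<in> new_edges r" "y = he z" using h(8) by auto
      then have "ke' y \<in> edges H' \<and> src H' (ke' y) = kv' (src H y) \<and> tgt H' (ke' y) = kv' (tgt H y) \<and>
        elab H' (ke' y) = elab H y"
      proof cases
        case old
        then have "ke y \<in> edges D'" using morphD(3)[OF k] by simp
        then show ?thesis
          using old ke'D morphD(4-6)[OF k old] kv'D[OF wf_graph_srcD[OF D old]] kv'D[OF wf_graph_tgtD[OF D old]]
            subgraphD(2)[OF h(2)] subgraphD(4-6)[OF h(2) old] subgraphD(2,4-6)[OF h'(2)] by auto
      next
        case (new z)
        then have "src (rhs r) z \<in> nodes (rhs r)" "tgt (rhs r) z \<in> nodes (rhs r)"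
          using wf_graph_srcD[OF wf_ruleD(3)[OF r]] wf_graph_tgtD[OF wf_ruleD(3)[OF r]] by simp_all
        then show ?thesis using new morphD(3-6)[OF h(3)] morphD(3-6)[OF h'(3)] ke'_he kv'_hv by simp
      qed
      then show "ke' y \<in> edges H'" "src H' (ke' y) = kv' (src H y)" "tgt H' (ke' y) = kv' (tgt H y)"
        "elab H' (ke' y) = elab H y" by simp_all
    qed
qed

text \<open>Gluing is functorial.\<close>
lemma glued_rhs_extend:
  assumes r: "wf_rule r" and D: "wf_graph D"
    and k: "morph D D' kv ke" and ikv: "inj_on kv (nodes D)" and ike: "inj_on ke (edges D)"
    and H: "glued_rhs D r hv he H" and H': "glued_rhs D' r hv' he' H'"
    and Kv: "\<forall>z\<in>nodes (itf r). hv z \<in> nodes D \<and> hv' z = kv (hv z)"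
    and Ke: "\<forall>z\<in>edges (itf r). he z \<in> edges D \<and> he' z = ke (he z)"
  obtains kv' ke' where "morph H H' kv' ke'" "inj_on kv' (nodes H)" "inj_on ke' (edges H)"
    "kv' ` nodes H = kv ` nodes D \<union> hv' ` new_nodes r"
    "ke' ` edges H = ke ` edges D \<union> he' ` new_edges r"
    "\<forall>x\<in>nodes D. kv' x = kv x"
proof -
  note h = glued_rhsD[OF H] and h' = glued_rhsD[OF H']
  define kv' where "kv' x = (if x \<in> nodes D then kv x else hv' (inv_into (new_nodes r) hv x))" for x
  define ke' where "ke' x = (if x \<in> edges D then ke x else he' (inv_into (new_edges r) he x))" for x
  have kv'D: "x \<in> nodes D \<Longrightarrow> kv' x = kv x" and ke'D: "y \<in> edges D \<Longrightarrow> ke' y = ke y" for x y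
    by (simp_all add: kv'_def ke'_def)
  have kv'_hv: "kv' (hv z) = hv' z" if "z \<in> nodes (rhs r)" for z
  proof (cases "z \<in> nodes (itf r)")
    case False
    then have "hv z \<notin> nodes D" using h(7) that by auto
    moreover have "inv_into (new_nodes r) hv (hv z) = z"
      using inv_into_f_f[OF inj_on_subset[OF h(4)]] that False by blast
    ultimately show ?thesis by (simp add: kv'_def)
  qed (use Kv kv'D in auto)
  have ke'_he: "ke' (he z) = he' z" if "z \<in> edges (rhs r)" for z
  proof (cases "z \<in> edges (itf r)")
    case False
    then have "he z \<notin> edges D" using h(9) that by auto
    moreover have "inv_into (new_edges r) he (he z) = z"
      using inv_into_f_f[OF inj_on_subset[OF h(5)]] that False by blast
    ultimately show ?thesis by (simp add: ke'_def)
  qed (use Ke ke'D in auto)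
  have kD: "kv ` nodes D \<subseteq> nodes D'" "ke ` edges D \<subseteq> edges D'" using k by (auto simp: morph_def)
  have bij_V: "bij_betw kv' (hv ` new_nodes r) (hv' ` new_nodes r)"
    by (rule bij_betw_along[OF inj_on_subset[OF h'(4) Diff_subset]]) (simp add: kv'_hv)
  have bij_F: "bij_betw ke' (he ` new_edges r) (he' ` new_edges r)"
    by (rule bij_betw_along[OF inj_on_subset[OF h'(5) Diff_subset]]) (simp add: ke'_he)
  have bij_D: "bij_betw kv' (nodes D) (kv ` nodes D)"
    using bij_betw_along[OF ikv, of kv' id] kv'D by simp
  have bij_E: "bij_betw ke' (edges D) (ke ` edges D)"
    using bij_betw_along[OF ike, of ke' id] ke'D by simp
  have dV: "kv ` nodes D \<inter> hv' ` new_nodes r = {}" and dF: "ke ` edges D \<inter> he' ` new_edges r = {}"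
    using kD h'(7,9) by blast+
  have bij_H: "bij_betw kv' (nodes H) (kv ` nodes D \<union> hv' ` new_nodes r)"
    unfolding h(6) by (rule bij_betw_combine[OF bij_D bij_V dV])
  have bij_H': "bij_betw ke' (edges H) (ke ` edges D \<union> he' ` new_edges r)"
    unfolding h(8) by (rule bij_betw_combine[OF bij_E bij_F dF])
  have "morph H H' kv' ke'" by (rule morph_glued_rhs[OF r D k H H' kv'D ke'D kv'_hv ke'_he])
  then show ?thesis
    by (rule that[OF _ bij_betw_imp_inj_on[OF bij_H] bij_betw_imp_inj_on[OF bij_H']
          bij_betw_imp_surj_on[OF bij_H] bij_betw_imp_surj_on[OF bij_H']]) (simp add: kv'D)
qed

lemma extension_glued_rhs:
  assumes E: "extension Gc G B D D' kv ke cv ce a" and r: "wf_rule r"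
    and H: "glued_rhs D r hv he H" and H': "glued_rhs D' r hv' he' H'"
    and Kv: "\<forall>z\<in>nodes (itf r). hv z \<in> nodes D \<and> hv' z = kv (hv z)"
    and Ke: "\<forall>z\<in>edges (itf r). he z \<in> edges D \<and> he' z = ke (he z)"
  obtains kv' ke' where "extension Gc G B H H' kv' ke' cv ce a"
proof -
  let ?CV = "nodes G - nodes Gc" and ?CE = "edges G - edges Gc"
  note e = extensionD[OF E] and h = glued_rhsD[OF H] and h' = glued_rhsD[OF H']
  obtain kv' ke' where k: "morph H H' kv' ke'" "inj_on kv' (nodes H)" "inj_on ke' (edges H)"
    "kv' ` nodes H = kv ` nodes D \<union> hv' ` new_nodes r" "ke' ` edges H = ke ` edges D \<union> he' ` new_edges r"
    and agree: "\<forall>x\<in>nodes D. kv' x = kv x"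
    by (rule glued_rhs_extend[OF r e(2,4,5,6) H H' Kv Ke])
  have cD': "cv ` ?CV \<subseteq> nodes D'" "ce ` ?CE \<subseteq> edges D'" using e(9,11) by auto
  have attach: "attach Gc kv cv a v = attach Gc kv' cv a v" if "v \<in> nodes Gc \<longrightarrow> v \<in> B" for v
    using that e(14) agree by (simp add: attach_def)
  show thesis
  proof (rule that, rule extensionI[OF e(1) h(1) h'(1) k(1-3) e(7,8)])
    show "nodes H' = kv' ` nodes H \<union> cv ` ?CV" "edges H' = ke' ` edges H \<union> ce ` ?CE"
      unfolding h'(6,8) e(9,11) k(4,5) by (simp_all only: Un_ac)
    have "hv' ` new_nodes r \<inter> cv ` ?CV = {}" "he' ` new_edges r \<inter> ce ` ?CE = {}" using h'(7,9) cD' by blast+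
    then show "kv' ` nodes H \<inter> cv ` ?CV = {}" "ke' ` edges H \<inter> ce ` ?CE = {}"
      unfolding k(4,5) Int_Un_distrib2 e(10,12) by simp_all
    show "nlab H' (cv x) = nlab G x" if x: "x \<in> ?CV" for x
    proof -
      have "cv x \<in> nodes D'" using x cD' by blast
      then show ?thesis using subgraphD(3)[OF h'(2)] e(13)[OF x] by simp
    qed
    show "a b \<in> nodes H" if "b \<in> B" for b
      using subgraphD(1)[OF h(2)] e(14)[OF that] by blast
    fix d assume d: "d \<in> ?CE"
    then have "ce d \<in> edges D'" using cD' by auto
    then show "elab H' (ce d) = elab G d" "src H' (ce d) = attach Gc kv' cv a (src G d)"
      "tgt H' (ce d) = attach Gc kv' cv a (tgt G d)"
      using e(15-17)[OF d] subgraphD(4-6)[OF h'(2)] attach boundaryD(5,6)[OF e(1) d] by simp_all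
  qed
qed

lemma extension_step:
  assumes E: "extension Gc G B X X' kv ke cv ce a" and r: "wf_rule r"
    and D: "direct_der Rs X r gv ge Y tr" and D': "direct_der Rs X' r gv' ge' Y' tr'"
    and mv: "\<forall>v\<in>nodes (lhs r). gv' v = kv (gv v)" and me: "\<forall>e\<in>edges (lhs r). ge' e = ke (ge e)"
    and B: "\<forall>b\<in>B. tr (a b) \<noteq> None"
  obtains kv' ke' cv' ce' where "extension Gc G B Y Y' kv' ke' cv' ce' (\<lambda>b. the (tr (a b)))"
proof -
  obtain H hv he \<phi>v \<phi>e where M: "is_match r X gv ge" and H: "glued_rhs (deleted X r gv ge) r hv he H"
    and K: "\<forall>v\<in>nodes (itf r). hv v = gv v" "\<forall>e\<in>edges (itf r). he e = ge e"
    and \<phi>: "iso H Y \<phi>v \<phi>e" and tr: "tr = (\<lambda>v. if v \<in> nodes (deleted X r gv ge) then Some (\<phi>v v) else None)"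
    by (rule direct_derE[OF D])
  obtain H' hv' he' \<phi>v' \<phi>e' where M': "is_match r X' gv' ge'" and H': "glued_rhs (deleted X' r gv' ge') r hv' he' H'"
    and K': "\<forall>v\<in>nodes (itf r). hv' v = gv' v" "\<forall>e\<in>edges (itf r). he' e = ge' e"
    and \<phi>': "iso H' Y' \<phi>v' \<phi>e'"
    by (rule direct_derE[OF D'])
  have aD: "\<forall>b\<in>B. a b \<in> nodes (deleted X r gv ge)" using B tr by (auto split: if_splits)
  note ED = extension_deleted[OF E r M M' mv me aD]
  have "\<forall>z\<in>nodes (itf r). hv z \<in> nodes (deleted X r gv ge) \<and> hv' z = kv (hv z)"
    "\<forall>z\<in>edges (itf r). he z \<in> edges (deleted X r gv ge) \<and> he' z = ke (he z)"
    using K K' mv me match_itf_nodes[OF M r] match_itf_edges[OF M r] wf_ruleD(4,5)[OF r] by auto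
  then obtain kv' ke' where EH: "extension Gc G B H H' kv' ke' cv ce a"
    by (rule extension_glued_rhs[OF ED r H H'])
  have "\<forall>b\<in>B. (\<phi>v \<circ> a) b = the (tr (a b))" using aD tr by (simp del: deleted_simps)
  from extension_cong_attach[OF extension_iso_transport[OF EH \<phi> \<phi>'] this] show thesis
    by (rule that)
qed

text \<open>Every edge of \<open>X'\<close> outside the embedded match is attached to a node of \<open>X\<close> kept by the
  match or to the context.\<close>
lemma extension_match:
  assumes E: "extension Gc G B X X' kv ke cv ce a" and M: "is_match r X gv ge"
    and B: "\<forall>b\<in>B. a b \<notin> gv ` (nodes (lhs r) - nodes (itf r))"
  shows "is_match r X' (kv \<circ> gv) (ke \<circ> ge)"
proof -
  let ?DV = "gv ` (nodes (lhs r) - nodes (itf r))"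
  let ?DV' = "(kv \<circ> gv) ` (nodes (lhs r) - nodes (itf r))"
  note e = extensionD[OF E] and m = matchD[OF M]
  have kept: "kv y \<notin> ?DV'" if y: "y \<in> nodes X" "y \<notin> ?DV" for y
  proof
    assume "kv y \<in> ?DV'"
    then obtain l where l: "l \<in> nodes (lhs r) - nodes (itf r)" "kv y = kv (gv l)" by auto
    then have "y = gv l" using y(1) m(4) inj_onD[OF e(5)] by blast
    then show False using y(2) l(1) by blast
  qed
  have ctx: "cv x \<notin> ?DV'" if x: "x \<in> nodes G - nodes Gc" for x
  proof
    assume "cv x \<in> ?DV'"
    then obtain l where l: "l \<in> nodes (lhs r) - nodes (itf r)" "cv x = kv (gv l)" by auto
    then have "gv l \<in> nodes X" using m(4) by auto
    then have "cv x \<in> kv ` nodes X" using l(2) by simp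
    then show False using e(10) x by blast
  qed
  have attach: "attach Gc kv cv a v \<notin> ?DV'" if v: "v \<in> nodes G" "v \<in> nodes Gc \<longrightarrow> v \<in> B" for v
  proof (cases "v \<in> nodes Gc")
    case True
    then have "a v \<in> nodes X" "a v \<notin> ?DV" using v(2) e(14) B by simp_all
    then show ?thesis using kept True by (simp add: attach_def)
  next
    case False
    then show ?thesis using ctx v(1) by (simp add: attach_def)
  qed
  have dangling: "src X' d \<notin> ?DV' \<and> tgt X' d \<notin> ?DV'" if d: "d \<in> edges X' - (ke \<circ> ge) ` edges (lhs r)" for d
  proof (cases "d \<in> ke ` edges X")
    case True
    then obtain y where y: "y \<in> edges X" "d = ke y" by auto
    then have "y \<notin> ge ` edges (lhs r)" using d by auto
    then show ?thesis
      using kept m(6,7)[OF y(1)] morphD(4,5)[OF e(4) y(1)] y wf_graph_srcD[OF e(2) y(1)]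
        wf_graph_tgtD[OF e(2) y(1)] by simp
  next
    case False
    then obtain y where y: "y \<in> edges G - edges Gc" "d = ce y" using d e(11) by auto
    have "src G y \<in> nodes G" "tgt G y \<in> nodes G"
      using y(1) wf_graph_srcD wf_graph_tgtD boundaryD(2)[OF e(1)] by blast+
    then show ?thesis
      using attach e(16,17)[OF y(1)] boundaryD(5,6)[OF e(1) y(1)] y(2) by simp
  qed
  show ?thesis
    unfolding is_match_def
  proof (intro conjI ballI)
    show "morph (lhs r) X' (kv \<circ> gv) (ke \<circ> ge)" by (rule morph_comp[OF m(1) e(4)])
    show "inj_on (kv \<circ> gv) (nodes (lhs r))" by (rule comp_inj_on_subset[OF m(2,4) e(5)])
    show "inj_on (ke \<circ> ge) (edges (lhs r))" by (rule comp_inj_on_subset[OF m(3,5) e(6)])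
  qed (use dangling in simp_all)
qed

lemma ders_iso_target:
  assumes "ders Rs X M s" "iso M M' fv fe"
  shows "\<exists>s'. ders Rs X M' s'"
  using assms
proof (induction arbitrary: M' fv fe rule: ders.induct)
  case (refl G H gv ge)
  then show ?case using ders.refl iso_comp by blast
next
  case (step G r gv ge G' t1 H t2)
  then show ?case using ders.step by blast
qed

lemma extension_ders:
  assumes "ders Rs X M s" "gt_system Rs" "extension Gc G B X X' kv ke cv ce a" "\<forall>b\<in>B. s (a b) \<noteq> None"
  shows "\<exists>M' s' kv' ke' cv' ce'. ders Rs X' M' s' \<and> extension Gc G B M M' kv' ke' cv' ce' (\<lambda>b. the (s (a b)))"
  using assms
proof (induction arbitrary: X' kv ke cv ce a rule: ders.induct)
  case (refl X M fv fe)
  note E = extension_iso_transport[OF refl(4) refl(2) iso_id]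
  have "\<forall>b\<in>B. (fv \<circ> a) b = the ((\<lambda>v. if v \<in> nodes X then Some (fv v) else None) (a b))"
    using extensionD(14)[OF refl(4)] by simp
  note E' = extension_cong_attach[OF E this]
  have "ders Rs X' X' (\<lambda>v. if v \<in> nodes X' then Some (id v) else None)"
    by (rule ders.refl[OF extensionD(3)[OF refl(4)] iso_id])
  with E' show ?case by blast
next
  case (step X r gv ge Y t1 M t2)
  obtain M: "r \<in> Rs" "wf_graph X" "is_match r X gv ge"
    and t1: "\<forall>v. t1 v \<noteq> None \<longrightarrow> v \<in> nodes (deleted X r gv ge)"
    by (rule direct_derE[OF step(1)]) auto
  have r: "wf_rule r" using step(4) M(1) by (rule gt_system_wf_rule)
  have t1B: "\<forall>b\<in>B. t1 (a b) \<noteq> None" using step(6) by (auto simp: map_comp_def split: option.splits)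
  then have "\<forall>b\<in>B. a b \<notin> gv ` (nodes (lhs r) - nodes (itf r))" using t1 by fastforce
  then have M': "is_match r X' (kv \<circ> gv) (ke \<circ> ge)" by (rule extension_match[OF step(5) M(3)])
  obtain Y' t1' where D': "direct_der Rs X' r (kv \<circ> gv) (ke \<circ> ge) Y' t1'"
    by (rule direct_der_exists[OF M(1) r extensionD(3)[OF step(5)] M'])
  obtain kv1 ke1 cv1 ce1 where E1: "extension Gc G B Y Y' kv1 ke1 cv1 ce1 (\<lambda>b. the (t1 (a b)))"
    by (rule extension_step[OF step(5) r step(1) D' _ _ t1B]) simp_all
  have "\<forall>b\<in>B. t2 (the (t1 (a b))) \<noteq> None"
    using step(6) t1B by (auto simp: map_comp_def split: option.splits)
  then obtain M' s' kv' ke' cv' ce' where R: "ders Rs Y' M' s'"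
    "extension Gc G B M M' kv' ke' cv' ce' (\<lambda>b. the (t2 (the (t1 (a b)))))"
    using step.IH[OF step(4) E1] by blast
  have "\<forall>b\<in>B. the (t2 (the (t1 (a b)))) = the ((t2 \<circ>\<^sub>m t1) (a b))"
    using t1B by (auto simp: map_comp_def split: option.splits)
  note E' = extension_cong_attach[OF R(2) this]
  with ders.step[OF D' R(1)] show ?case by blast
qed

lemma extension_unique:
  assumes E1: "extension Gc G B M M1 k1v k1e c1v c1e a1" and E2: "extension Gc G B M M2 k2v k2e c2v c2e a2"
    and A: "\<forall>b\<in>B. a1 b = a2 b"
  obtains fv fe where "iso M1 M2 fv fe"
proof -
  let ?CV = "nodes G - nodes Gc" and ?CE = "edges G - edges Gc"
  note e1 = extensionD[OF E1] and e2 = extensionD[OF E2]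
  obtain fv where bv: "bij_betw fv (nodes M1) (nodes M2)"
    and F1: "\<And>x. x \<in> nodes M \<Longrightarrow> fv (k1v x) = k2v x" and F2: "\<And>x. x \<in> ?CV \<Longrightarrow> fv (c1v x) = c2v x"
    by (rule bij_betw_two_pieces[OF e1(5,7) e2(5,7) e1(10) e2(10)]) (simp_all only: e1(9) e2(9))
  obtain fe where be: "bij_betw fe (edges M1) (edges M2)"
    and G1: "\<And>x. x \<in> edges M \<Longrightarrow> fe (k1e x) = k2e x" and G2: "\<And>x. x \<in> ?CE \<Longrightarrow> fe (c1e x) = c2e x"
    by (rule bij_betw_two_pieces[OF e1(6,8) e2(6,8) e1(12) e2(12)]) (simp_all only: e1(11) e2(11))
  have attach: "fv (attach Gc k1v c1v a1 v) = attach Gc k2v c2v a2 v"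
    if "v \<in> nodes G" "v \<in> nodes Gc \<longrightarrow> v \<in> B" for v
    using that F1 F2 e1(14) A by (auto simp: attach_def)
  have "morph M1 M2 fv fe"
    unfolding morph_def
  proof (intro conjI ballI)
    fix y assume "y \<in> nodes M1"
    then consider (old) x where "x \<in> nodes M" "y = k1v x" | (new) x where "x \<in> ?CV" "y = c1v x"
      using e1(9) by auto
    then have "fv y \<in> nodes M2 \<and> nlab M2 (fv y) = nlab M1 y"
    proof cases
      case (old x)
      then show ?thesis using F1 morphD(1,2)[OF e1(4)] morphD(1,2)[OF e2(4)] by simp
    next
      case (new x)
      then show ?thesis using F2 e1(13) e2(9,13) by simp
    qed
    then show "fv y \<in> nodes M2" "nlab M2 (fv y) = nlab M1 y" by simp_all
  next
    fix y assume "y \<in> edges M1"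
    then consider (old) x where "x \<in> edges M" "y = k1e x" | (new) x where "x \<in> ?CE" "y = c1e x"
      using e1(11) by auto
    then have "fe y \<in> edges M2 \<and> src M2 (fe y) = fv (src M1 y) \<and> tgt M2 (fe y) = fv (tgt M1 y) \<and>
      elab M2 (fe y) = elab M1 y"
    proof cases
      case (old x)
      then show ?thesis
        using G1 F1 morphD(3-6)[OF e1(4)] morphD(3-6)[OF e2(4)]
          wf_graph_srcD[OF e1(2)] wf_graph_tgtD[OF e1(2)] by simp
    next
      case (new x)
      then have "src G x \<in> nodes G" "tgt G x \<in> nodes G"
        using wf_graph_srcD wf_graph_tgtD boundaryD(2)[OF e1(1)] by blast+
      with new show ?thesis
        using G2 e1(15-17) e2(11,15-17) attach boundaryD(5,6)[OF e1(1)] by simp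
    qed
    then show "fe y \<in> edges M2" "src M2 (fe y) = fv (src M1 y)" "tgt M2 (fe y) = fv (tgt M1 y)"
      "elab M2 (fe y) = elab M1 y" by simp_all
  qed
  with bv be show thesis using that by (simp add: iso_def)
qed

subsection \<open>Parallel independence\<close>

abbreviation retained_nodes :: "('a, 'b) graph \<Rightarrow> ('a, 'b) gt_rule \<Rightarrow> (nat \<Rightarrow> nat) \<Rightarrow>
    ('a, 'b) gt_rule \<Rightarrow> (nat \<Rightarrow> nat) \<Rightarrow> nat set" where
  "retained_nodes G r1 g1v r2 g2v \<equiv>
     nodes G - g1v ` (nodes (lhs r1) - nodes (itf r1)) - g2v ` (nodes (lhs r2) - nodes (itf r2))"

abbreviation retained_edges :: "('a, 'b) graph \<Rightarrow> ('a, 'b) gt_rule \<Rightarrow> (nat \<Rightarrow> nat) \<Rightarrow>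
    ('a, 'b) gt_rule \<Rightarrow> (nat \<Rightarrow> nat) \<Rightarrow> nat set" where
  "retained_edges G r1 g1e r2 g2e \<equiv>
     edges G - g1e ` (edges (lhs r1) - edges (itf r1)) - g2e ` (edges (lhs r2) - edges (itf r2))"

lemma par_indep_sym: "par_indep r1 g1v g1e r2 g2v g2e \<longleftrightarrow> par_indep r2 g2v g2e r1 g1v g1e"
  unfolding par_indep_def by blast

lemma par_indep_match_kept:
  assumes PI: "par_indep r1 g1v g1e r2 g2v g2e" and M1: "is_match r1 G g1v g1e"
    and M2: "is_match r2 G g2v g2e" and r1: "wf_rule r1"
  shows "g2v ` nodes (lhs r2) \<subseteq> nodes (deleted G r1 g1v g1e)"
    "g2e ` edges (lhs r2) \<subseteq> edges (deleted G r1 g1v g1e)"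
proof -
  have "g1v ` nodes (lhs r1) \<inter> g2v ` nodes (lhs r2) \<subseteq> g1v ` nodes (itf r1)"
    "g1e ` edges (lhs r1) \<inter> g2e ` edges (lhs r2) \<subseteq> g1e ` edges (itf r1)"
    using PI unfolding par_indep_def by blast+
  from this[THEN disjoint_Diff_of_overlap]
  have "g2v ` nodes (lhs r2) \<inter> g1v ` (nodes (lhs r1) - nodes (itf r1)) = {}"
    "g2e ` edges (lhs r2) \<inter> g1e ` (edges (lhs r1) - edges (itf r1)) = {}"
    unfolding inj_on_image_set_diff[OF matchD(2)[OF M1] Diff_subset wf_ruleD(4)[OF r1]]
      inj_on_image_set_diff[OF matchD(3)[OF M1] Diff_subset wf_ruleD(5)[OF r1]] .
  with matchD(4,5)[OF M2] show "g2v ` nodes (lhs r2) \<subseteq> nodes (deleted G r1 g1v g1e)"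
    "g2e ` edges (lhs r2) \<subseteq> edges (deleted G r1 g1v g1e)"
    unfolding deleted_simps by blast+
qed

lemma par_indep_retained:
  assumes PI: "par_indep r1 g1v g1e r2 g2v g2e" and M1: "is_match r1 G g1v g1e"
    and M2: "is_match r2 G g2v g2e" and r1: "wf_rule r1" and r2: "wf_rule r2" and G: "wf_graph G"
  shows "g1v ` nodes (itf r1) \<subseteq> retained_nodes G r1 g1v r2 g2v"
    "g2v ` nodes (itf r2) \<subseteq> retained_nodes G r1 g1v r2 g2v"
    "\<And>x. x \<in> retained_edges G r1 g1e r2 g2e \<Longrightarrow>
      src G x \<in> retained_nodes G r1 g1v r2 g2v \<and> tgt G x \<in> retained_nodes G r1 g1v r2 g2v"
proof -
  have kept1: "g1v ` nodes (itf r1) \<subseteq> nodes (deleted G r2 g2v g2e)"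
    using par_indep_match_kept(1)[OF PI[THEN par_indep_sym[THEN iffD1]] M2 M1 r2] image_mono[OF wf_ruleD(4)[OF r1]]
    by (rule order_trans[rotated])
  have kept2: "g2v ` nodes (itf r2) \<subseteq> nodes (deleted G r1 g1v g1e)"
    using par_indep_match_kept(1)[OF PI M1 M2 r1] image_mono[OF wf_ruleD(4)[OF r2]]
    by (rule order_trans[rotated])
  have itf1: "g1v ` nodes (itf r1) \<subseteq> nodes (deleted G r1 g1v g1e)"
    and itf2: "g2v ` nodes (itf r2) \<subseteq> nodes (deleted G r2 g2v g2e)"
    using match_itf_nodes[OF M1 r1] match_itf_nodes[OF M2 r2] by (simp_all only: image_subsetI)
  show "g1v ` nodes (itf r1) \<subseteq> retained_nodes G r1 g1v r2 g2v"
    using itf1 kept1 unfolding deleted_simps by (rule subset_Diff_Diff)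
  show "g2v ` nodes (itf r2) \<subseteq> retained_nodes G r1 g1v r2 g2v"
    using kept2 itf2 unfolding deleted_simps by (rule subset_Diff_Diff)
  fix x assume "x \<in> retained_edges G r1 g1e r2 g2e"
  then have "x \<in> edges (deleted G r1 g1v g1e)" "x \<in> edges (deleted G r2 g2v g2e)" by simp_all
  from deleted_edge_endpoints[OF M1 r1 G this(1)] deleted_edge_endpoints[OF M2 r2 G this(2)]
  show "src G x \<in> retained_nodes G r1 g1v r2 g2v \<and> tgt G x \<in> retained_nodes G r1 g1v r2 g2v"
    by simp
qed

text \<open>\<open>C\<close> consists of the items of \<open>G\<close> kept by both steps and disjoint copies of the new items of
  both right-hand sides, embedded by \<open>l1, u1\<close> and \<open>l2, u2\<close>: the common result of applying the
  two steps in either order.\<close>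
definition parallel_result :: "('a, 'b) graph \<Rightarrow> ('a, 'b) gt_rule \<Rightarrow> (nat \<Rightarrow> nat) \<Rightarrow> (nat \<Rightarrow> nat) \<Rightarrow>
    ('a, 'b) gt_rule \<Rightarrow> (nat \<Rightarrow> nat) \<Rightarrow> (nat \<Rightarrow> nat) \<Rightarrow> ('a, 'b) graph \<Rightarrow>
    (nat \<Rightarrow> nat) \<Rightarrow> (nat \<Rightarrow> nat) \<Rightarrow> (nat \<Rightarrow> nat) \<Rightarrow> (nat \<Rightarrow> nat) \<Rightarrow> bool" where
  "parallel_result G r1 g1v g1e r2 g2v g2e C l1 u1 l2 u2 \<longleftrightarrow>
    nodes C = retained_nodes G r1 g1v r2 g2v \<union> l1 ` new_nodes r1 \<union> l2 ` new_nodes r2 \<and>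
    inj_on l1 (new_nodes r1) \<and> inj_on l2 (new_nodes r2) \<and>
    retained_nodes G r1 g1v r2 g2v \<inter> l1 ` new_nodes r1 = {} \<and>
    retained_nodes G r1 g1v r2 g2v \<inter> l2 ` new_nodes r2 = {} \<and> l1 ` new_nodes r1 \<inter> l2 ` new_nodes r2 = {} \<and>
    (\<forall>z\<in>nodes (itf r1). l1 z = g1v z) \<and> (\<forall>z\<in>nodes (itf r2). l2 z = g2v z) \<and>
    (\<forall>x\<in>retained_nodes G r1 g1v r2 g2v. nlab C x = nlab G x) \<and>
    (\<forall>z\<in>new_nodes r1. nlab C (l1 z) = nlab (rhs r1) z) \<and> (\<forall>z\<in>new_nodes r2. nlab C (l2 z) = nlab (rhs r2) z) \<and>
    edges C = retained_edges G r1 g1e r2 g2e \<union> u1 ` new_edges r1 \<union> u2 ` new_edges r2 \<and>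
    inj_on u1 (new_edges r1) \<and> inj_on u2 (new_edges r2) \<and>
    retained_edges G r1 g1e r2 g2e \<inter> u1 ` new_edges r1 = {} \<and>
    retained_edges G r1 g1e r2 g2e \<inter> u2 ` new_edges r2 = {} \<and> u1 ` new_edges r1 \<inter> u2 ` new_edges r2 = {} \<and>
    (\<forall>x\<in>retained_edges G r1 g1e r2 g2e. src C x = src G x \<and> tgt C x = tgt G x \<and> elab C x = elab G x) \<and>
    (\<forall>z\<in>new_edges r1. src C (u1 z) = l1 (src (rhs r1) z) \<and> tgt C (u1 z) = l1 (tgt (rhs r1) z) \<and>
       elab C (u1 z) = elab (rhs r1) z) \<and>
    (\<forall>z\<in>new_edges r2. src C (u2 z) = l2 (src (rhs r2) z) \<and> tgt C (u2 z) = l2 (tgt (rhs r2) z) \<and>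
       elab C (u2 z) = elab (rhs r2) z)"

lemma parallel_result_sym:
  assumes "parallel_result G r1 g1v g1e r2 g2v g2e C l1 u1 l2 u2"
  shows "parallel_result G r2 g2v g2e r1 g1v g1e C l2 u2 l1 u1"
proof -
  have "retained_nodes G r2 g2v r1 g1v = retained_nodes G r1 g1v r2 g2v"
    "retained_edges G r2 g2e r1 g1e = retained_edges G r1 g1e r2 g2e" by blast+
  with assms show ?thesis
    unfolding parallel_result_def by (simp only:) (simp add: Un_ac Int_commute conj_ac)
qed

lemma parallel_resultD:
  assumes "parallel_result G r1 g1v g1e r2 g2v g2e C l1 u1 l2 u2"
  defines "N \<equiv> retained_nodes G r1 g1v r2 g2v" and "E \<equiv> retained_edges G r1 g1e r2 g2e"
  shows "nodes C = N \<union> l1 ` new_nodes r1 \<union> l2 ` new_nodes r2"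
    "inj_on l1 (new_nodes r1)" "inj_on l2 (new_nodes r2)"
    "N \<inter> l1 ` new_nodes r1 = {}" "N \<inter> l2 ` new_nodes r2 = {}" "l1 ` new_nodes r1 \<inter> l2 ` new_nodes r2 = {}"
    "\<And>z. z \<in> nodes (itf r1) \<Longrightarrow> l1 z = g1v z" "\<And>z. z \<in> nodes (itf r2) \<Longrightarrow> l2 z = g2v z"
    "\<And>x. x \<in> N \<Longrightarrow> nlab C x = nlab G x"
    "\<And>z. z \<in> new_nodes r1 \<Longrightarrow> nlab C (l1 z) = nlab (rhs r1) z"
    "\<And>z. z \<in> new_nodes r2 \<Longrightarrow> nlab C (l2 z) = nlab (rhs r2) z"
    "edges C = E \<union> u1 ` new_edges r1 \<union> u2 ` new_edges r2"
    "inj_on u1 (new_edges r1)" "inj_on u2 (new_edges r2)"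
    "E \<inter> u1 ` new_edges r1 = {}" "E \<inter> u2 ` new_edges r2 = {}" "u1 ` new_edges r1 \<inter> u2 ` new_edges r2 = {}"
    "\<And>x. x \<in> E \<Longrightarrow> src C x = src G x \<and> tgt C x = tgt G x \<and> elab C x = elab G x"
    "\<And>z. z \<in> new_edges r1 \<Longrightarrow>
      src C (u1 z) = l1 (src (rhs r1) z) \<and> tgt C (u1 z) = l1 (tgt (rhs r1) z) \<and> elab C (u1 z) = elab (rhs r1) z"
    "\<And>z. z \<in> new_edges r2 \<Longrightarrow>
      src C (u2 z) = l2 (src (rhs r2) z) \<and> tgt C (u2 z) = l2 (tgt (rhs r2) z) \<and> elab C (u2 z) = elab (rhs r2) z"
  using assms(1) unfolding parallel_result_def N_def E_def by (elim conjE; metis)+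

lemma parallel_result_iso:
  assumes P: "parallel_result G r1 g1v g1e r2 g2v g2e C l1 u1 l2 u2"
    and P': "parallel_result G r1 g1v g1e r2 g2v g2e C' l1' u1' l2' u2'"
    and K1: "g1v ` nodes (itf r1) \<subseteq> retained_nodes G r1 g1v r2 g2v"
    and K2: "g2v ` nodes (itf r2) \<subseteq> retained_nodes G r1 g1v r2 g2v"
    and ends: "\<And>x. x \<in> retained_edges G r1 g1e r2 g2e \<Longrightarrow>
      src G x \<in> retained_nodes G r1 g1v r2 g2v \<and> tgt G x \<in> retained_nodes G r1 g1v r2 g2v"
    and r1: "wf_rule r1" and r2: "wf_rule r2"
  obtains fv fe where "iso C C' fv fe"
proof -
  note p = parallel_resultD[OF P] and p' = parallel_resultD[OF P']
  obtain fv where fv: "bij_betw fv (nodes C) (nodes C')" and fN: "\<And>x. x \<in> retained_nodes G r1 g1v r2 g2v \<Longrightarrow> fv x = x"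
    and f1: "\<And>z. z \<in> new_nodes r1 \<Longrightarrow> fv (l1 z) = l1' z" and f2: "\<And>z. z \<in> new_nodes r2 \<Longrightarrow> fv (l2 z) = l2' z"
    by (rule bij_betw_three_pieces[OF p(2,3) p'(2,3) p(4-6) p'(4-6)]) (simp_all only: p(1) p'(1))
  obtain fe where fe: "bij_betw fe (edges C) (edges C')" and gE: "\<And>x. x \<in> retained_edges G r1 g1e r2 g2e \<Longrightarrow> fe x = x"
    and g1: "\<And>z. z \<in> new_edges r1 \<Longrightarrow> fe (u1 z) = u1' z" and g2: "\<And>z. z \<in> new_edges r2 \<Longrightarrow> fe (u2 z) = u2' z"
    by (rule bij_betw_three_pieces[OF p(13,14) p'(13,14) p(15-17) p'(15-17)]) (simp_all only: p(12) p'(12))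
  have f1R: "fv (l1 z) = l1' z" if "z \<in> nodes (rhs r1)" for z
    using that f1 fN K1 p(7) p'(7) by (cases "z \<in> nodes (itf r1)") auto
  have f2R: "fv (l2 z) = l2' z" if "z \<in> nodes (rhs r2)" for z
    using that f2 fN K2 p(8) p'(8) by (cases "z \<in> nodes (itf r2)") auto
  have "morph C C' fv fe"
    unfolding morph_def
  proof (intro conjI ballI)
    fix y assume "y \<in> nodes C"
    then consider "y \<in> retained_nodes G r1 g1v r2 g2v" | z where "z \<in> new_nodes r1" "y = l1 z"
      | z where "z \<in> new_nodes r2" "y = l2 z" using p(1) by blast
    then have "fv y \<in> nodes C' \<and> nlab C' (fv y) = nlab C y"
      by cases (simp_all add: fN f1 f2 p(9-11) p'(1,9-11))
    then show "fv y \<in> nodes C'" "nlab C' (fv y) = nlab C y" by simp_all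
  next
    fix y assume "y \<in> edges C"
    then consider (old) "y \<in> retained_edges G r1 g1e r2 g2e" | (new1) z where "z \<in> new_edges r1" "y = u1 z"
      | (new2) z where "z \<in> new_edges r2" "y = u2 z" using p(12) by blast
    then have "fe y \<in> edges C' \<and> src C' (fe y) = fv (src C y) \<and> tgt C' (fe y) = fv (tgt C y) \<and>
      elab C' (fe y) = elab C y"
    proof cases
      case old
      then show ?thesis using gE fN ends p(18) p'(12,18) by simp
    next
      case (new1 z)
      then have "src (rhs r1) z \<in> nodes (rhs r1)" "tgt (rhs r1) z \<in> nodes (rhs r1)"
        using wf_graph_srcD[OF wf_ruleD(3)[OF r1]] wf_graph_tgtD[OF wf_ruleD(3)[OF r1]] by simp_all
      with new1 show ?thesis using g1 f1R p(19) p'(12,19) by simp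
    next
      case (new2 z)
      then have "src (rhs r2) z \<in> nodes (rhs r2)" "tgt (rhs r2) z \<in> nodes (rhs r2)"
        using wf_graph_srcD[OF wf_ruleD(3)[OF r2]] wf_graph_tgtD[OF wf_ruleD(3)[OF r2]] by simp_all
      with new2 show ?thesis using g2 f2R p(20) p'(12,20) by simp
    qed
    then show "fe y \<in> edges C'" "src C' (fe y) = fv (src C y)" "tgt C' (fe y) = fv (tgt C y)"
      "elab C' (fe y) = elab C y" by simp_all
  qed
  with fv fe show thesis using that by (simp add: iso_def)
qed

lemma par_indep_match_glued:
  assumes PI: "par_indep r1 g1v g1e r2 g2v g2e" and M1: "is_match r1 G g1v g1e"
    and M2: "is_match r2 G g2v g2e" and r1: "wf_rule r1" and r2: "wf_rule r2" and G: "wf_graph G"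
    and A: "glued_rhs (deleted G r1 g1v g1e) r1 hv1 he1 A" and K1: "\<forall>v\<in>nodes (itf r1). hv1 v = g1v v"
  shows "is_match r2 A g2v g2e"
proof -
  let ?D = "deleted G r1 g1v g1e" and ?DV2 = "g2v ` (nodes (lhs r2) - nodes (itf r2))"
  note a = glued_rhsD[OF A] and m2 = matchD[OF M2] and kept = par_indep_match_kept[OF PI M1 M2 r1]
  have sub: "subgraph ?D G" by (auto simp: subgraph_def morph_def)
  have "morph (lhs r2) A g2v g2e"
    using morph_comp[OF morph_into_subgraph[OF m2(1) sub kept] a(2)[unfolded subgraph_def]] by simp
  moreover have "src A e \<notin> ?DV2 \<and> tgt A e \<notin> ?DV2" if e: "e \<in> edges A - g2e ` edges (lhs r2)" for e
  proof (cases "e \<in> edges ?D")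
    case True
    then have "src A e = src G e" "tgt A e = tgt G e" "e \<in> edges G" using subgraphD(4,5)[OF a(2)] by simp_all
    then show ?thesis using m2(6,7) e by simp
  next
    case False
    then obtain z where z: "z \<in> new_edges r1" "e = he1 z" using e a(8) by auto
    have "hv1 q \<notin> ?DV2" if q: "q \<in> nodes (rhs r1)" for q
    proof
      assume w: "hv1 q \<in> ?DV2"
      show False
      proof (cases "q \<in> nodes (itf r1)")
        case True
        then have "hv1 q \<in> g1v ` nodes (lhs r1) \<inter> g2v ` nodes (lhs r2)"
          using w K1 wf_ruleD(4)[OF r1] by auto
        then have "hv1 q \<in> g2v ` nodes (itf r2)" using PI by (auto simp: par_indep_def)
        then show False
          using w inj_on_image_set_diff[OF m2(2) Diff_subset wf_ruleD(4)[OF r2]] by simp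
      next
        case False
        have "hv1 q \<in> nodes ?D" using w kept(1) by blast
        moreover have "hv1 q \<in> hv1 ` new_nodes r1" using q False by blast
        ultimately show False using a(7) by blast
      qed
    qed
    then show ?thesis
      using z morphD(4,5)[OF a(3)] wf_graph_srcD[OF wf_ruleD(3)[OF r1]] wf_graph_tgtD[OF wf_ruleD(3)[OF r1]]
      by simp
  qed
  ultimately show ?thesis using m2(2,3) unfolding is_match_def by blast
qed

lemma par_indep_deleted_glued:
  assumes PI: "par_indep r1 g1v g1e r2 g2v g2e" and M1: "is_match r1 G g1v g1e"
    and M2: "is_match r2 G g2v g2e" and r1: "wf_rule r1"
    and A: "glued_rhs (deleted G r1 g1v g1e) r1 hv1 he1 A"
  shows "nodes (deleted A r2 g2v g2e) = retained_nodes G r1 g1v r2 g2v \<union> hv1 ` new_nodes r1"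
    "edges (deleted A r2 g2v g2e) = retained_edges G r1 g1e r2 g2e \<union> he1 ` new_edges r1"
proof -
  let ?D = "deleted G r1 g1v g1e"
  note a = glued_rhsD[OF A] and kept = par_indep_match_kept[OF PI M1 M2 r1]
  have "g2v ` (nodes (lhs r2) - nodes (itf r2)) \<subseteq> nodes ?D" "g2e ` (edges (lhs r2) - edges (itf r2)) \<subseteq> edges ?D"
    using kept by blast+
  from Un_Diff_disjoint[OF this(1) a(7)] Un_Diff_disjoint[OF this(2) a(9)]
  show "nodes (deleted A r2 g2v g2e) = retained_nodes G r1 g1v r2 g2v \<union> hv1 ` new_nodes r1"
    "edges (deleted A r2 g2v g2e) = retained_edges G r1 g1e r2 g2e \<union> he1 ` new_edges r1"
    unfolding deleted_simps a(6,8)[unfolded deleted_simps] by simp_all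
qed

lemma parallel_result_glued:
  assumes PI: "par_indep r1 g1v g1e r2 g2v g2e" and M1: "is_match r1 G g1v g1e"
    and M2: "is_match r2 G g2v g2e" and r1: "wf_rule r1"
    and A: "glued_rhs (deleted G r1 g1v g1e) r1 hv1 he1 A" and K1: "\<forall>v\<in>nodes (itf r1). hv1 v = g1v v"
    and C: "glued_rhs (deleted A r2 g2v g2e) r2 hv2 he2 C" and K2: "\<forall>v\<in>nodes (itf r2). hv2 v = g2v v"
  shows "parallel_result G r1 g1v g1e r2 g2v g2e C hv1 he1 hv2 he2"
proof -
  let ?D = "deleted G r1 g1v g1e" and ?DA = "deleted A r2 g2v g2e"
  let ?N = "retained_nodes G r1 g1v r2 g2v" and ?E = "retained_edges G r1 g1e r2 g2e"
  note a = glued_rhsD[OF A] and c = glued_rhsD[OF C]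
  note DA = par_indep_deleted_glued[OF PI M1 M2 r1 A]
  have NA: "?N \<subseteq> nodes ?D" "?E \<subseteq> edges ?D" by auto
  have labA: "nlab A x = nlab G x" if "x \<in> ?N" for x
    using subgraphD(3)[OF a(2)] that NA(1) by auto
  have edgeA: "src A x = src G x" "tgt A x = tgt G x" "elab A x = elab G x" if "x \<in> ?E" for x
    using subgraphD(4-6)[OF a(2)] that NA(2) by auto
  note mA = morphD[OF a(3)] and mC = morphD[OF c(3)]
  have newA: "hv1 ` new_nodes r1 \<subseteq> nodes ?DA" "he1 ` new_edges r1 \<subseteq> edges ?DA" using DA by auto
  have labC: "nlab C x = nlab A x" if "x \<in> nodes ?DA" for x
    using subgraphD(3)[OF c(2) that] by simp
  have edgeC: "src C x = src A x" "tgt C x = tgt A x" "elab C x = elab A x" if "x \<in> edges ?DA" for x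
    using subgraphD(4-6)[OF c(2) that] by simp_all
  show ?thesis
    unfolding parallel_result_def
  proof (intro conjI ballI)
    show "nodes C = ?N \<union> hv1 ` new_nodes r1 \<union> hv2 ` new_nodes r2" using c(6) DA(1) by simp
    show "edges C = ?E \<union> he1 ` new_edges r1 \<union> he2 ` new_edges r2" using c(8) DA(2) by simp
    show "inj_on hv1 (new_nodes r1)" "inj_on he1 (new_edges r1)"
      "inj_on hv2 (new_nodes r2)" "inj_on he2 (new_edges r2)"
      using inj_on_subset[OF a(4) Diff_subset] inj_on_subset[OF a(5) Diff_subset]
        inj_on_subset[OF c(4) Diff_subset] inj_on_subset[OF c(5) Diff_subset] .
    show "?N \<inter> hv1 ` new_nodes r1 = {}" "?E \<inter> he1 ` new_edges r1 = {}"
      using a(7,9) NA by blast+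
    show "?N \<inter> hv2 ` new_nodes r2 = {}" "hv1 ` new_nodes r1 \<inter> hv2 ` new_nodes r2 = {}"
      using c(7) unfolding DA(1) by blast+
    show "?E \<inter> he2 ` new_edges r2 = {}" "he1 ` new_edges r1 \<inter> he2 ` new_edges r2 = {}"
      using c(9) unfolding DA(2) by blast+
    show "hv1 z = g1v z" if "z \<in> nodes (itf r1)" for z using K1 that by blast
    show "hv2 z = g2v z" if "z \<in> nodes (itf r2)" for z using K2 that by blast
    fix x assume x: "x \<in> ?N"
    then have "x \<in> nodes ?DA" unfolding DA(1) by (rule UnI1)
    then show "nlab C x = nlab G x" using labC labA[OF x] by simp
  next
    fix z assume z: "z \<in> new_nodes r1"
    then have "hv1 z \<in> nodes ?DA" using newA(1) by blast
    then show "nlab C (hv1 z) = nlab (rhs r1) z" using labC mA(2) z by simp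
  next
    fix z assume "z \<in> new_nodes r2"
    then show "nlab C (hv2 z) = nlab (rhs r2) z" using mC(2) by simp
  next
    fix x assume x: "x \<in> ?E"
    then have "x \<in> edges ?DA" unfolding DA(2) by (rule UnI1)
    then show "src C x = src G x" "tgt C x = tgt G x" "elab C x = elab G x"
      using edgeC edgeA[OF x] by simp_all
  next
    fix z assume z: "z \<in> new_edges r1"
    then have "he1 z \<in> edges ?DA" using newA(2) by blast
    then show "src C (he1 z) = hv1 (src (rhs r1) z)" "tgt C (he1 z) = hv1 (tgt (rhs r1) z)"
      "elab C (he1 z) = elab (rhs r1) z" using edgeC mA(4-6) z by simp_all
  next
    fix z assume "z \<in> new_edges r2"
    then show "src C (he2 z) = hv2 (src (rhs r2) z)" "tgt C (he2 z) = hv2 (tgt (rhs r2) z)"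
      "elab C (he2 z) = elab (rhs r2) z" using mC(4-6) by simp_all
  qed
qed

text \<open>The second step is performed on the graph \<open>A\<close> glued by the first step and then
  transported to its isomorphic copy \<open>H1\<close>, an extension of \<open>A\<close> by the empty context.\<close>
lemma par_indep_second_step:
  assumes gt: "gt_system Rs" and d1: "direct_der Rs G r1 g1v g1e H1 t1"
    and M2: "is_match r2 G g2v g2e" and r2: "r2 \<in> Rs" and PI: "par_indep r1 g1v g1e r2 g2v g2e"
  obtains M s C l1 u1 l2 u2 \<psi>v \<psi>e where "ders Rs H1 M s" "iso C M \<psi>v \<psi>e" "wf_graph C"
    "parallel_result G r1 g1v g1e r2 g2v g2e C l1 u1 l2 u2"
proof -
  obtain A hv1 he1 \<phi>v \<phi>e where r1: "r1 \<in> Rs" and G: "wf_graph G" and M1: "is_match r1 G g1v g1e"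
    and A: "glued_rhs (deleted G r1 g1v g1e) r1 hv1 he1 A" and K1: "\<forall>v\<in>nodes (itf r1). hv1 v = g1v v"
    and \<phi>: "iso A H1 \<phi>v \<phi>e"
    by (rule direct_derE[OF d1])
  note wr1 = gt_system_wf_rule[OF gt r1] and wr2 = gt_system_wf_rule[OF gt r2]
  have wA: "wf_graph A" using glued_rhsD(1)[OF A] .
  have MA: "is_match r2 A g2v g2e" by (rule par_indep_match_glued[OF PI M1 M2 wr1 wr2 G A K1])
  obtain C hv2 he2 where C: "glued_rhs (deleted A r2 g2v g2e) r2 hv2 he2 C"
    and K2: "\<forall>v\<in>nodes (itf r2). hv2 v = g2v v" "\<forall>e\<in>edges (itf r2). he2 e = g2e e"
    by (rule glued_rhs_of_match[OF wr2 wA MA])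
  have wC: "wf_graph C" using glued_rhsD(1)[OF C] .
  note dA = direct_derI[OF r2 wA wC MA C K2 iso_id]
  have E: "extension A A {} A H1 \<phi>v \<phi>e id id id" using wA \<phi> by (simp add: extension_empty_context)
  have MH: "is_match r2 H1 (\<phi>v \<circ> g2v) (\<phi>e \<circ> g2e)" by (rule extension_match[OF E MA]) simp
  obtain M t where d: "direct_der Rs H1 r2 (\<phi>v \<circ> g2v) (\<phi>e \<circ> g2e) M t"
    by (rule direct_der_exists[OF r2 wr2 iso_wf_graph[OF \<phi> wA] MH])
  have "\<exists>kv ke. iso C M kv ke"
    by (rule extension_step[OF E wr2 dA d]) (use wA in \<open>auto simp: extension_empty_context\<close>)
  moreover have "ders Rs H1 M ((\<lambda>v. if v \<in> nodes M then Some (id v) else None) \<circ>\<^sub>m t)"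
    using d by (rule ders.step[OF _ ders.refl[OF _ iso_id]]) (rule direct_derE[OF d])
  moreover note parallel_result_glued[OF PI M1 M2 wr1 A K1 C K2(1)]
  ultimately show thesis using that wC by blast
qed

lemma par_indep_joinable:
  assumes gt: "gt_system Rs" and d1: "direct_der Rs G r1 g1v g1e H1 t1" and d2: "direct_der Rs G r2 g2v g2e H2 t2"
    and PI: "par_indep r1 g1v g1e r2 g2v g2e"
  shows "joinable Rs H1 H2"
proof -
  obtain r1: "r1 \<in> Rs" and G: "wf_graph G" and M1: "is_match r1 G g1v g1e" by (rule direct_derE[OF d1])
  obtain r2: "r2 \<in> Rs" and M2: "is_match r2 G g2v g2e" by (rule direct_derE[OF d2])
  note wr1 = gt_system_wf_rule[OF gt r1] and wr2 = gt_system_wf_rule[OF gt r2]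
  obtain M1 s1 C1 \<psi>1v \<psi>1e l1 u1 l2 u2 where s1: "ders Rs H1 M1 s1" and \<psi>1: "iso C1 M1 \<psi>1v \<psi>1e"
    and wC1: "wf_graph C1" and P1: "parallel_result G r1 g1v g1e r2 g2v g2e C1 l1 u1 l2 u2"
    by (rule par_indep_second_step[OF gt d1 M2 r2 PI])
  obtain M2 s2 C2 \<psi>2v \<psi>2e l2' u2' l1' u1' where s2: "ders Rs H2 M2 s2" and \<psi>2: "iso C2 M2 \<psi>2v \<psi>2e"
    and P2: "parallel_result G r2 g2v g2e r1 g1v g1e C2 l2' u2' l1' u1'"
    by (rule par_indep_second_step[OF gt d2 M1 r1 PI[THEN par_indep_sym[THEN iffD1]]])
  obtain f g where "iso C1 C2 f g"
    by (rule parallel_result_iso[OF P1 parallel_result_sym[OF P2] par_indep_retained[OF PI M1 M2 wr1 wr2 G]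
          wr1 wr2])
  then have "iso M1 M2 (\<psi>2v \<circ> f \<circ> inv_into (nodes C1) \<psi>1v) (\<psi>2e \<circ> g \<circ> inv_into (edges C1) \<psi>1e)"
    using iso_comp[OF iso_comp[OF iso_inv_into[OF \<psi>1 wC1]] \<psi>2] by (simp add: comp_assoc)
  then obtain s1' where "ders Rs H1 M2 s1'" using ders_iso_target[OF s1] by blast
  then show ?thesis using s2 by (auto simp: joinable_def)
qed

subsection \<open>Dependent steps and critical pairs\<close>

lemma joinable_iso:
  assumes "iso H1 H2 fv fe" "wf_graph H1" "wf_graph H2"
  shows "joinable Rs H1 H2"
  unfolding joinable_def using ders.refl[OF assms(2,1)] ders.refl[OF assms(3) iso_id] by blast

lemma same_match_joinable:
  assumes gt: "gt_system Rs"
    and d1: "direct_der Rs G r g1v g1e H1 t1" and d2: "direct_der Rs G r g2v g2e H2 t2"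
    and mv: "\<forall>v\<in>nodes (lhs r). g1v v = g2v v" and me: "\<forall>e\<in>edges (lhs r). g1e e = g2e e"
  shows "joinable Rs H1 H2"
proof -
  obtain r: "r \<in> Rs" and G: "wf_graph G" by (rule direct_derE[OF d1])
  obtain kv ke cv ce where "extension G G {} H1 H2 kv ke cv ce (\<lambda>b. the (t1 (id b)))"
    by (rule extension_step[OF extension_refl[OF boundary_self[OF G]] gt_system_wf_rule[OF gt r] d1 d2])
      (use mv me in simp_all)
  with G show ?thesis
    using joinable_iso extension_empty_context extensionD(3) by metis
qed

text \<open>By the dangling condition, only persistent nodes of the restricted pair are attached to the
  rest of \<open>G\<close>.\<close>
lemma match_union_restriction:
  assumes gt: "gt_system Rs"
    and d1: "direct_der Rs G r1 g1v g1e H1 t1" and d2: "direct_der Rs G r2 g2v g2e H2 t2"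
  obtains Gc H1' t1' H2' t2' where "subgraph Gc G"
    "nodes Gc = g1v ` nodes (lhs r1) \<union> g2v ` nodes (lhs r2)"
    "edges Gc = g1e ` edges (lhs r1) \<union> g2e ` edges (lhs r2)"
    "direct_der Rs Gc r1 g1v g1e H1' t1'" "direct_der Rs Gc r2 g2v g2e H2' t2'"
    "boundary Gc G (persistent Gc t1' t2')"
proof -
  obtain r1: "r1 \<in> Rs" and G: "wf_graph G" and M1: "is_match r1 G g1v g1e" by (rule direct_derE[OF d1])
  obtain r2: "r2 \<in> Rs" and M2: "is_match r2 G g2v g2e" by (rule direct_derE[OF d2])
  note wr1 = gt_system_wf_rule[OF gt r1] and wr2 = gt_system_wf_rule[OF gt r2]
  note m1 = matchD[OF M1] and m2 = matchD[OF M2]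
  define Gc where "Gc = G\<lparr>nodes := g1v ` nodes (lhs r1) \<union> g2v ` nodes (lhs r2),
                          edges := g1e ` edges (lhs r1) \<union> g2e ` edges (lhs r2)\<rparr>"
  have Gcs: "src Gc = src G" "tgt Gc = tgt G" "nlab Gc = nlab G" "elab Gc = elab G"
    "nodes Gc = g1v ` nodes (lhs r1) \<union> g2v ` nodes (lhs r2)"
    "edges Gc = g1e ` edges (lhs r1) \<union> g2e ` edges (lhs r2)" by (simp_all add: Gc_def)
  have sub: "subgraph Gc G" using m1(4,5) m2(4,5) by (auto simp: subgraph_def morph_def Gcs)
  have mo1: "morph (lhs r1) Gc g1v g1e" and mo2: "morph (lhs r2) Gc g2v g2e"
    using m1(1) m2(1) by (auto simp: morph_def Gcs)
  have wGc: "wf_graph Gc"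
    using mo1 mo2 wf_ruleD(1)[OF wr1] wf_ruleD(1)[OF wr2]
    by (auto simp: wf_graph_def morph_def Gcs)
  have "is_match r1 Gc g1v g1e" "is_match r2 Gc g2v g2e"
    using M1 M2 mo1 mo2 subgraphD(2)[OF sub] unfolding is_match_def Gcs(1,2) by blast+
  then obtain H1' t1' H2' t2' where d1': "direct_der Rs Gc r1 g1v g1e H1' t1'"
    and d2': "direct_der Rs Gc r2 g2v g2e H2' t2'"
    using direct_der_exists[OF r1 wr1 wGc] direct_der_exists[OF r2 wr2 wGc] by metis
  obtain p1 where t1': "t1' = (\<lambda>v. if v \<in> nodes (deleted Gc r1 g1v g1e) then Some (p1 v) else None)"
    by (rule direct_derE[OF d1'])
  obtain p2 where t2': "t2' = (\<lambda>v. if v \<in> nodes (deleted Gc r2 g2v g2e) then Some (p2 v) else None)"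
    by (rule direct_derE[OF d2'])
  have "v \<in> persistent Gc t1' t2'"
    if e: "e \<in> edges G - edges Gc" and v: "v = src G e \<or> v = tgt G e" and vGc: "v \<in> nodes Gc" for e v
  proof -
    have eG: "e \<in> edges G" and n1: "e \<notin> g1e ` edges (lhs r1)" and n2: "e \<notin> g2e ` edges (lhs r2)"
      using e Gcs(6) by auto
    have "v \<notin> g1v ` (nodes (lhs r1) - nodes (itf r1))" "v \<notin> g2v ` (nodes (lhs r2) - nodes (itf r2))"
      using v m1(6,7)[OF eG n1] m2(6,7)[OF eG n2] by metis+
    then show ?thesis using vGc by (simp add: persistent_def t1' t2')
  qed
  then have "boundary Gc G (persistent Gc t1' t2')"
    unfolding boundary_def using wGc G sub by (auto simp: persistent_def)
  then show thesis using that sub Gcs(5,6) d1' d2' by blast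
qed

text \<open>Both joining derivations embed into \<open>G\<close>; since their tracks agree on the persistent nodes,
  the two embedded results attach the context to the same nodes and are therefore isomorphic.\<close>
lemma strongly_joinable_embedding:
  assumes gt: "gt_system Rs" and B: "boundary Gc G (persistent Gc t1' t2')"
    and d1': "direct_der Rs Gc r1 g1v g1e H1' t1'" and d1: "direct_der Rs G r1 g1v g1e H1 t1"
    and d2': "direct_der Rs Gc r2 g2v g2e H2' t2'" and d2: "direct_der Rs G r2 g2v g2e H2 t2"
    and sj: "strongly_joinable Rs Gc H1' t1' H2' t2'"
  shows "joinable Rs H1 H2"
proof -
  let ?P = "persistent Gc t1' t2'"
  obtain M s1 s2 where s1: "ders Rs H1' M s1" and s2: "ders Rs H2' M s2"
    and agree: "\<forall>v\<in>?P. (s1 \<circ>\<^sub>m t1') v \<noteq> None \<and> (s1 \<circ>\<^sub>m t1') v = (s2 \<circ>\<^sub>m t2') v"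
    using sj unfolding strongly_joinable_def by blast
  obtain r1: "r1 \<in> Rs" by (rule direct_derE[OF d1])
  obtain r2: "r2 \<in> Rs" by (rule direct_derE[OF d2])
  have t1P: "\<forall>b\<in>?P. t1' (id b) \<noteq> None" and t2P: "\<forall>b\<in>?P. t2' (id b) \<noteq> None"
    by (auto simp: persistent_def)
  have s1P: "s1 (the (t1' b)) \<noteq> None" and s2P: "s2 (the (t2' b)) \<noteq> None"
    and sP: "the (s1 (the (t1' b))) = the (s2 (the (t2' b)))" if b: "b \<in> ?P" for b
  proof -
    obtain y1 y2 where y: "t1' b = Some y1" "t2' b = Some y2" using b by (auto simp: persistent_def)
    have "(s1 \<circ>\<^sub>m t1') b \<noteq> None" "(s1 \<circ>\<^sub>m t1') b = (s2 \<circ>\<^sub>m t2') b" using agree b by blast+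
    then show "s1 (the (t1' b)) \<noteq> None" "s2 (the (t2' b)) \<noteq> None"
      "the (s1 (the (t1' b))) = the (s2 (the (t2' b)))" using y by simp_all
  qed
  note E0 = extension_refl[OF B]
  obtain k1v k1e c1v c1e where E1: "extension Gc G ?P H1' H1 k1v k1e c1v c1e (\<lambda>b. the (t1' (id b)))"
    by (rule extension_step[OF E0 gt_system_wf_rule[OF gt r1] d1' d1 _ _ t1P]) simp_all
  obtain k2v k2e c2v c2e where E2: "extension Gc G ?P H2' H2 k2v k2e c2v c2e (\<lambda>b. the (t2' (id b)))"
    by (rule extension_step[OF E0 gt_system_wf_rule[OF gt r2] d2' d2 _ _ t2P]) simp_all
  obtain M1 s1' k1v' k1e' c1v' c1e' where R1: "ders Rs H1 M1 s1'"
    "extension Gc G ?P M M1 k1v' k1e' c1v' c1e' (\<lambda>b. the (s1 (the (t1' (id b)))))"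
    using extension_ders[OF s1 gt E1] s1P by auto
  obtain M2 s2' k2v' k2e' c2v' c2e' where R2: "ders Rs H2 M2 s2'"
    "extension Gc G ?P M M2 k2v' k2e' c2v' c2e' (\<lambda>b. the (s2 (the (t2' (id b)))))"
    using extension_ders[OF s2 gt E2] s2P by auto
  obtain fv fe where "iso M2 M1 fv fe"
    by (rule extension_unique[OF R2(2) R1(2)]) (use sP in simp)
  then obtain s2'' where "ders Rs H2 M1 s2''" using ders_iso_target[OF R2(1)] by blast
  then show ?thesis using R1(1) by (auto simp: joinable_def)
qed

lemma subgraph_in_subgraph_closure:
  assumes "wf_graph G" "cls G \<in> D" "wf_graph H" "subgraph H G"
  shows "cls H \<in> subgraph_closure D"
  using assms unfolding subgraph_closure_def subgraph_closed_def by blast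

lemma critical_steps_joinable:
  assumes gt: "gt_system Rs"
    and cp: "\<And>G r1 g1v g1e H1 t1 r2 g2v g2e H2 t2.
           critical_pair Rs G r1 g1v g1e H1 t1 r2 g2v g2e H2 t2 \<Longrightarrow>
           cls G \<in> subgraph_closure D \<Longrightarrow>
           strongly_joinable Rs G H1 t1 H2 t2"
    and G: "wf_graph G" and GD: "cls G \<in> D"
    and d1: "direct_der Rs G r1 g1v g1e H1 t1" and d2: "direct_der Rs G r2 g2v g2e H2 t2"
    and dep: "\<not> par_indep r1 g1v g1e r2 g2v g2e"
    and diff: "r1 = r2 \<longrightarrow> \<not> ((\<forall>v\<in>nodes (lhs r1). g1v v = g2v v) \<and> (\<forall>e\<in>edges (lhs r1). g1e e = g2e e))"
  shows "joinable Rs H1 H2"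
proof -
  obtain Gc H1' t1' H2' t2' where sub: "subgraph Gc G"
    and Gc: "nodes Gc = g1v ` nodes (lhs r1) \<union> g2v ` nodes (lhs r2)"
      "edges Gc = g1e ` edges (lhs r1) \<union> g2e ` edges (lhs r2)"
    and d1': "direct_der Rs Gc r1 g1v g1e H1' t1'" and d2': "direct_der Rs Gc r2 g2v g2e H2' t2'"
    and B: "boundary Gc G (persistent Gc t1' t2')"
    by (rule match_union_restriction[OF gt d1 d2])
  have "critical_pair Rs Gc r1 g1v g1e H1' t1' r2 g2v g2e H2' t2'"
    unfolding critical_pair_def using d1' d2' Gc dep diff by blast
  moreover have "cls Gc \<in> subgraph_closure D"
    by (rule subgraph_in_subgraph_closure[OF G GD boundaryD(1)[OF B] sub])
  ultimately have "strongly_joinable Rs Gc H1' t1' H2' t2'" by (rule cp)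
  then show ?thesis by (rule strongly_joinable_embedding[OF gt B d1' d1 d2' d2])
qed

theorem theorem5p2:
  fixes Rs :: "('a::finite, 'b::finite) gt_rule set"
    and D :: "('a, 'b) graph set set"
  assumes "gt_system Rs"
    and "D \<subseteq> graph_classes"
    and "\<And>G r1 g1v g1e H1 t1 r2 g2v g2e H2 t2.
           critical_pair Rs G r1 g1v g1e H1 t1 r2 g2v g2e H2 t2 \<Longrightarrow>
           cls G \<in> subgraph_closure D \<Longrightarrow>
           strongly_joinable Rs G H1 t1 H2 t2"
  shows "locally_confluent_on Rs D"
  unfolding locally_confluent_on_def
proof (intro allI impI)
  fix G r1 g1v g1e H1 t1 r2 g2v g2e H2 t2
  assume G: "wf_graph G" and GD: "cls G \<in> D"
    and d1: "direct_der Rs G r1 g1v g1e H1 t1" and d2: "direct_der Rs G r2 g2v g2e H2 t2"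
  show "joinable Rs H1 H2"
  proof (cases "par_indep r1 g1v g1e r2 g2v g2e")
    case True
    then show ?thesis by (rule par_indep_joinable[OF assms(1) d1 d2])
  next
    case dep: False
    show ?thesis
    proof (cases "r1 = r2 \<and> (\<forall>v\<in>nodes (lhs r1). g1v v = g2v v) \<and> (\<forall>e\<in>edges (lhs r1). g1e e = g2e e)")
      case True
      then show ?thesis using same_match_joinable[OF assms(1) d1] d2 by blast
    next
      case False
      then have diff: "r1 = r2 \<longrightarrow>
          \<not> ((\<forall>v\<in>nodes (lhs r1). g1v v = g2v v) \<and> (\<forall>e\<in>edges (lhs r1). g1e e = g2e e))"
        by blast
      show ?thesis by (rule critical_steps_joinable[OF assms(1) _ G GD d1 d2 dep diff]) (fact assms(3))
    qed
  qed
qed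

end
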